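(* Assume the row-sums and column-sums of $A$ all equal $d\ge2$. Let $(e_n)_{n\ge1}$ be an enumeration of the orthonormal eigenbasis $\{\mathrm e_\gamma\}\cup\{\mathrm e_{(\gamma,\nu,j)}\}$ of $L^2(G_A,\mu_{G_A})$ described in the context, ordered so that the corresponding eigenvalues of $|D|$ are non-decreasing, and let $\rho_n(a)=\langle e_n,ae_n\rangle_{L^2(G_A,\mu_{G_A})}$ for $a\in O_A$. Then there is no density one subsequence $(n_k)_k$ of $\mathbb N$ (i.e. strictly increasing with $\#\{k:n_k\le M\}/M\to1$) along which $(\rho_{n_k})_k$ converges in the weak$^*$ topology.
   Context: $A\in M_N(\{0,1\})$ primitive; $V_A$ admissible finite words ($x_1\cdots x_k$ with $A_{x_n,x_{n+1}}=1$), $\emptyset$ empty word, $|\alpha|$ length, $\beta V_A$ words starting with $\beta$; $\Omega_A$ infinite admissible sequences, shift $\sigma$, cylinders $C(\alpha)$. $\lambda_A$ Perron–Frobenius eigenvalue, $u>0$, $Au=\lambda_Au$, $\sum u_i=1$; $P_{i,j}=A_{i,j}u_j/(\lambda_Au_i)$; $\mathfrak C(i)=\{j:A_{i,j}=1\}$, $\mathfrak c(i)=\#\mathfrak C(i)$; $F_A(x)=u_{x_1}(1-P_{x_1,x_2})$, $t_c=\lambda_A^{-1}\sup_\tau h_\tau/\tau(F_A)$ (sup over $\sigma$-invariant ergodic probability measures, $h_\tau$ entropy). $\mu_c(C(\alpha_1\cdots\alpha_n))=u_{\alpha_n}\lambda_A^{-(n-1)}$; fix $\lambda>1$, $d(x,y)=\lambda^{-\inf\{n-1:x_n\ne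 y_n\}}$; $\Delta_{C(\beta)}$ ($\beta\ne\emptyset$) is the self-adjoint operator on $L^2(C(\beta),\mu_c)$ given on locally constant $f$ by $\Delta_{C(\beta)}f(x)=\int_{C(\beta)}\frac{f(x)-f(y)}{d(x,y)^{\log_\lambda\lambda_A}}d\mu_c(y)$. $G_A=\{(x,n,y)\in\Omega_A\times\mathbb Z\times\Omega_A:\exists k\ge0,n+k\ge0,\sigma^{n+k}x=\sigma^ky\}$, Deaconu–Renault étale groupoid ($r(x,n,y)=x$, $s(x,n,y)=y$). $\kappa(x,n,y)=\min\{k\ge\max(0,-n):\sigma^{n+k}x=\sigma^ky\}$. $I_A$: pairs $\gamma=\alpha.\beta$, $\alpha\in V_A$, $\beta\ne\emptyset$, with $\alpha=\emptyset$ or ($A_{\alpha_{|\alpha|},\beta_{|\beta|}}=1$, $\alpha_{|\alpha|}\ne\beta_{|\beta|-1}$, vacuous if $|\beta|=1$); $r(\gamma)=\alpha$, $s(\gamma)=\beta$. $G_\gamma=\{(x,n,y):y\in C(\beta),x=\alpha\sigma^{|\beta|-1}y,n=|\alpha|-|\beta|+1,\kappa=|\beta|-1\}$, $G_A=\bigsqcup G_\gamma$, $s_\gamma=s|_{G_\gamma}$ homeomorphism onto $C(\beta)$, $\mu_\gamma(B)=\mu_c(s_\gamma B)$, $\mu_{G_A}$ equal to $\mu_\gamma$ on $G_\gamma$. $\Delta=\bigoplus\Delta_\gamma$, $\Delta_\gamma$ the transport of $\Delta_{C(s(\gamma))}$ via $f\mapsto f\circ s_\gamma$. $L|_{G_\gamma}=\frac{\log\lambda_A}{t_c}(|r(\gamma)|+|s(\gamma)|)$,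 $P_A$ projection onto closed span of $\{\chi_{G_\gamma}:|s(\gamma)|=1\}$, $D=-\Delta+(2P_A-1)M_L$, $|D|=\Delta+M_L$. Eigenbasis: for $\gamma\in I_A$, $\mathrm e_\gamma=\mu_c(C(s(\gamma)))^{-1/2}\chi_{G_\gamma}$; for $\nu\in s(\gamma)V_A$ with $\mathfrak c(\nu_{|\nu|})\ge2$ and $1\le j\le\mathfrak c(\nu_{|\nu|})-1$, $\mathrm e_{(\gamma,\nu,j)}=h_{\nu,j}\circ s_\gamma$ on $G_\gamma$ (zero elsewhere), where, for a chosen bijection $\iota_\nu:\{1,\dots,\mathfrak c(\nu_{|\nu|})\}\to\mathfrak C(\nu_{|\nu|})$, $q_m=\sum_{k\le m}P_{\nu_{|\nu|},\iota_\nu(k)}$, $h_{\nu,j}=\sum_ka^{(\nu,j)}_k\chi_{C(\nu\iota_\nu(k))}$ with $a^{(\nu,j)}_k=(P_{\nu_{|\nu|},\iota_\nu(j+1)}/(\mu_c(C(\nu))q_jq_{j+1}))^{1/2}$ for $k\le j$, $a^{(\nu,j)}_{j+1}=-(q_j/(\mu_c(C(\nu))q_{j+1}P_{\nu_{|\nu|},\iota_\nu(j+1)}))^{1/2}$, and $0$ for $k\ge j+2$. These form an orthonormal basis of eigenvectors of $|D|$. $O_A$ is the universal C*-algebra generated by $S_1,\dots,S_N$ with $\sum S_iS_i^*=1$, $S_i^*S_k=\delta_{ik}\sum_jA_{ij}S_jS_j^*$, identified with $C^*_r(G_A)$ via $S_i\mapsto$ characteristic function of $\{(x,1,\sigma x):x\in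 C(i)\}$, acting on $L^2(G_A,\mu_{G_A})$ by left convolution $(f\xi)(g)=\sum_{r(h)=r(g)}f(h)\xi(h^{-1}g)$. *)

theory Defs
  imports "HOL-Probability.Probability"
begin

(* Conventions: the alphabet {1..N} of the paper is rendered as {0..<N};
   finite words are lists, infinite sequences are functions nat => nat
   (position 0 = first letter). The matrix A is a function nat => nat => nat
   whose entries (for indices < N) are 0 or 1. *)

definition adm :: "nat \<Rightarrow> (nat \<Rightarrow> nat \<Rightarrow> nat) \<Rightarrow> nat list \<Rightarrow> bool" where
  "adm N A w \<longleftrightarrow> (\<forall>i<length w. w ! i < N) \<and> (\<forall>i. Suc i < length w \<longrightarrow> A (w ! i) (w ! Suc i) = 1)"

definition OmegaA :: "nat \<Rightarrow> (nat \<Rightarrow> nat \<Rightarrow> nat) \<Rightarrow> (nat \<Rightarrow> nat) set" where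
  "OmegaA N A = {x. (\<forall>n. x n < N) \<and> (\<forall>n. A (x n) (x (Suc n)) = 1)}"

definition shiftk :: "nat \<Rightarrow> (nat \<Rightarrow> nat) \<Rightarrow> (nat \<Rightarrow> nat)" where
  "shiftk k x = (\<lambda>n. x (n + k))"

definition shift1 :: "(nat \<Rightarrow> nat) \<Rightarrow> (nat \<Rightarrow> nat)" where
  "shift1 = shiftk 1"

definition cyl :: "nat \<Rightarrow> (nat \<Rightarrow> nat \<Rightarrow> nat) \<Rightarrow> nat list \<Rightarrow> (nat \<Rightarrow> nat) set" where
  "cyl N A \<alpha> = {x \<in> OmegaA N A. \<forall>i<length \<alpha>. x i = \<alpha> ! i}"

definition prep :: "nat list \<Rightarrow> (nat \<Rightarrow> nat) \<Rightarrow> (nat \<Rightarrow> nat)" where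
  "prep \<alpha> z = (\<lambda>n. if n < length \<alpha> then \<alpha> ! n else z (n - length \<alpha>))"

fun Apow :: "nat \<Rightarrow> (nat \<Rightarrow> nat \<Rightarrow> nat) \<Rightarrow> nat \<Rightarrow> nat \<Rightarrow> nat \<Rightarrow> nat" where
  "Apow N A 0 i j = (if i = j then 1 else 0)"
| "Apow N A (Suc k) i j = (\<Sum>l<N. Apow N A k i l * A l j)"

definition primitive :: "nat \<Rightarrow> (nat \<Rightarrow> nat \<Rightarrow> nat) \<Rightarrow> bool" where
  "primitive N A \<longleftrightarrow> N \<ge> 1 \<and> (\<exists>k>0. \<forall>i<N. \<forall>j<N. Apow N A k i j > 0)"

definition lamA :: "nat \<Rightarrow> (nat \<Rightarrow> nat \<Rightarrow> nat) \<Rightarrow> real" where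
  "lamA N A = (THE l. l > 0 \<and> (\<exists>u::nat \<Rightarrow> real. (\<forall>i<N. u i > 0) \<and>
       (\<forall>i<N. (\<Sum>j<N. real (A i j) * u j) = l * u i)))"

definition uvec :: "nat \<Rightarrow> (nat \<Rightarrow> nat \<Rightarrow> nat) \<Rightarrow> nat \<Rightarrow> real" where
  "uvec N A = (THE u. (\<forall>i<N. u i > 0) \<and> (\<forall>i\<ge>N. u i = 0) \<and> (\<Sum>i<N. u i) = 1 \<and>
       (\<forall>i<N. (\<Sum>j<N. real (A i j) * u j) = lamA N A * u i))"

definition Pm :: "nat \<Rightarrow> (nat \<Rightarrow> nat \<Rightarrow> nat) \<Rightarrow> nat \<Rightarrow> nat \<Rightarrow> real" where
  "Pm N A i j = real (A i j) * uvec N A j / (lamA N A * uvec N A i)"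

definition Cset :: "nat \<Rightarrow> (nat \<Rightarrow> nat \<Rightarrow> nat) \<Rightarrow> nat \<Rightarrow> nat set" where
  "Cset N A i = {j. j < N \<and> A i j = 1}"

definition cc :: "nat \<Rightarrow> (nat \<Rightarrow> nat \<Rightarrow> nat) \<Rightarrow> nat \<Rightarrow> nat" where
  "cc N A i = card (Cset N A i)"

(* Borel sigma-algebra of Omega_A (product topology), as a measurable space *)
definition MOmega :: "nat \<Rightarrow> (nat \<Rightarrow> nat \<Rightarrow> nat) \<Rightarrow> (nat \<Rightarrow> nat) measure" where
  "MOmega N A = restrict_space (PiM UNIV (\<lambda>_::nat. count_space (UNIV::nat set))) (OmegaA N A)"

definition muc :: "nat \<Rightarrow> (nat \<Rightarrow> nat \<Rightarrow> nat) \<Rightarrow> (nat \<Rightarrow> nat) measure" where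
  "muc N A = (SOME M. sets M = sets (MOmega N A) \<and> emeasure M (space M) = 1 \<and>
     (\<forall>\<alpha>. adm N A \<alpha> \<and> \<alpha> \<noteq> [] \<longrightarrow>
        emeasure M (cyl N A \<alpha>) = ennreal (uvec N A (last \<alpha>) / lamA N A ^ (length \<alpha> - 1))))"

definition FA :: "nat \<Rightarrow> (nat \<Rightarrow> nat \<Rightarrow> nat) \<Rightarrow> (nat \<Rightarrow> nat) \<Rightarrow> real" where
  "FA N A x = uvec N A (x 0) * (1 - Pm N A (x 0) (x 1))"

definition inv_ergodic :: "nat \<Rightarrow> (nat \<Rightarrow> nat \<Rightarrow> nat) \<Rightarrow> (nat \<Rightarrow> nat) measure \<Rightarrow> bool" where
  "inv_ergodic N A \<tau> \<longleftrightarrow> sets \<tau> = sets (MOmega N A) \<and> prob_space \<tau> \<and>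
     (\<forall>B\<in>sets \<tau>. emeasure \<tau> (shift1 -` B \<inter> space \<tau>) = emeasure \<tau> B) \<and>
     (\<forall>B\<in>sets \<tau>. shift1 -` B \<inter> space \<tau> = B \<longrightarrow> emeasure \<tau> B = 0 \<or> emeasure \<tau> B = 1)"

definition meas_partition :: "'a measure \<Rightarrow> 'a set set \<Rightarrow> bool" where
  "meas_partition \<tau> P \<longleftrightarrow> finite P \<and> P \<subseteq> sets \<tau> \<and> \<Union>P = space \<tau> \<and> disjoint P"

definition part_entropy :: "'a measure \<Rightarrow> 'a set set \<Rightarrow> real" where
  "part_entropy \<tau> P = - (\<Sum>B\<in>P. measure \<tau> B * ln (measure \<tau> B))"

definition join_part :: "(nat \<Rightarrow> nat) measure \<Rightarrow> (nat \<Rightarrow> nat) set set \<Rightarrow> nat \<Rightarrow> (nat \<Rightarrow> nat) set set" where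
  "join_part \<tau> P n = {(\<Inter>i<n. shiftk i -` f i) \<inter> space \<tau> | f. \<forall>i<n. f i \<in> P}"

definition ks_entropy_part :: "(nat \<Rightarrow> nat) measure \<Rightarrow> (nat \<Rightarrow> nat) set set \<Rightarrow> real" where
  "ks_entropy_part \<tau> P = lim (\<lambda>n. part_entropy \<tau> (join_part \<tau> P (Suc n)) / real (Suc n))"

definition ks_entropy :: "(nat \<Rightarrow> nat) measure \<Rightarrow> real" where
  "ks_entropy \<tau> = Sup {ks_entropy_part \<tau> P | P. meas_partition \<tau> P}"

definition tc :: "nat \<Rightarrow> (nat \<Rightarrow> nat \<Rightarrow> nat) \<Rightarrow> real" where
  "tc N A = (1 / lamA N A) * Sup {ks_entropy \<tau> / (\<integral>x. FA N A x \<partial>\<tau>) | \<tau>. inv_ergodic N A \<tau>}"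

type_synonym gel = "(nat \<Rightarrow> nat) \<times> int \<times> (nat \<Rightarrow> nat)"

definition GA :: "nat \<Rightarrow> (nat \<Rightarrow> nat \<Rightarrow> nat) \<Rightarrow> gel set" where
  "GA N A = {(x, n, y). x \<in> OmegaA N A \<and> y \<in> OmegaA N A \<and>
      (\<exists>k::nat. n + int k \<ge> 0 \<and> shiftk (nat (n + int k)) x = shiftk k y)}"

definition kappa :: "gel \<Rightarrow> nat" where
  "kappa g = (case g of (x, n, y) \<Rightarrow>
      (LEAST k::nat. int k \<ge> max 0 (- n) \<and> shiftk (nat (n + int k)) x = shiftk k y))"

definition gmul :: "gel \<Rightarrow> gel \<Rightarrow> gel" where
  "gmul g h = (case g of (x, n, _) \<Rightarrow> (case h of (_, m, z) \<Rightarrow> (x, n + m, z)))"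

definition ginv :: "gel \<Rightarrow> gel" where
  "ginv g = (case g of (x, n, y) \<Rightarrow> (y, - n, x))"

definition src :: "gel \<Rightarrow> (nat \<Rightarrow> nat)" where
  "src g = snd (snd g)"

definition IA :: "nat \<Rightarrow> (nat \<Rightarrow> nat \<Rightarrow> nat) \<Rightarrow> (nat list \<times> nat list) set" where
  "IA N A = {(\<alpha>, \<beta>). adm N A \<alpha> \<and> adm N A \<beta> \<and> \<beta> \<noteq> [] \<and>
      (\<alpha> = [] \<or> (A (last \<alpha>) (last \<beta>) = 1 \<and> (length \<beta> = 1 \<or> last \<alpha> \<noteq> \<beta> ! (length \<beta> - 2))))}"

definition Gg :: "nat \<Rightarrow> (nat \<Rightarrow> nat \<Rightarrow> nat) \<Rightarrow> nat list \<times> nat list \<Rightarrow> gel set" where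
  "Gg N A \<gamma> = (case \<gamma> of (\<alpha>, \<beta>) \<Rightarrow>
      {(x, n, y). y \<in> cyl N A \<beta> \<and> x = prep \<alpha> (shiftk (length \<beta> - 1) y) \<and>
         n = int (length \<alpha>) - int (length \<beta>) + 1 \<and> kappa (x, n, y) = length \<beta> - 1})"

definition sinv :: "nat list \<times> nat list \<Rightarrow> (nat \<Rightarrow> nat) \<Rightarrow> gel" where
  "sinv \<gamma> y = (case \<gamma> of (\<alpha>, \<beta>) \<Rightarrow>
      (prep \<alpha> (shiftk (length \<beta> - 1) y), int (length \<alpha>) - int (length \<beta>) + 1, y))"

section \<open>L^2(G_A, mu_{G_A}): integration against mu_{G_A} = sum over pieces of mu_gamma\<close>

definition norm2sq :: "nat \<Rightarrow> (nat \<Rightarrow> nat \<Rightarrow> nat) \<Rightarrow> (gel \<Rightarrow> complex) \<Rightarrow> ennreal" where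
  "norm2sq N A f = (\<integral>\<^sup>+\<gamma>. (\<integral>\<^sup>+y. indicator (cyl N A (snd \<gamma>)) y * ennreal ((cmod (f (sinv \<gamma> y)))\<^sup>2)
        \<partial>muc N A) \<partial>count_space (IA N A))"

definition L2 :: "nat \<Rightarrow> (nat \<Rightarrow> nat \<Rightarrow> nat) \<Rightarrow> (gel \<Rightarrow> complex) \<Rightarrow> bool" where
  "L2 N A f \<longleftrightarrow> (\<forall>\<gamma>\<in>IA N A. (\<lambda>y. indicator (cyl N A (snd \<gamma>)) y * f (sinv \<gamma> y)) \<in> borel_measurable (muc N A))
      \<and> norm2sq N A f < \<infinity>"

definition inner_G :: "nat \<Rightarrow> (nat \<Rightarrow> nat \<Rightarrow> nat) \<Rightarrow> (gel \<Rightarrow> complex) \<Rightarrow> (gel \<Rightarrow> complex) \<Rightarrow> complex" where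
  "inner_G N A f h = (\<integral>\<gamma>. (\<integral>y. indicator (cyl N A (snd \<gamma>)) y * (cnj (f (sinv \<gamma> y)) * h (sinv \<gamma> y))
        \<partial>muc N A) \<partial>count_space (IA N A))"

section \<open>O_A acting on L^2(G_A) by left convolution\<close>

definition conv :: "nat \<Rightarrow> (nat \<Rightarrow> nat \<Rightarrow> nat) \<Rightarrow> (gel \<Rightarrow> complex) \<Rightarrow> (gel \<Rightarrow> complex) \<Rightarrow> gel \<Rightarrow> complex" where
  "conv N A f \<xi> g = (\<Sum>\<^sub>\<infinity>h\<in>{h \<in> GA N A. fst h = fst g}. f h * \<xi> (gmul (ginv h) g))"

(* True: S_i (char. function of {(x,1,sigma x) : x in C(i)}); False: S_i^* = its involution *)
definition genset :: "nat \<Rightarrow> (nat \<Rightarrow> nat \<Rightarrow> nat) \<Rightarrow> bool \<Rightarrow> nat \<Rightarrow> gel set" where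
  "genset N A b i = (if b then {(x, 1, shift1 x) | x. x \<in> cyl N A [i]}
                         else {(shift1 x, -1, x) | x. x \<in> cyl N A [i]})"

definition genact :: "nat \<Rightarrow> (nat \<Rightarrow> nat \<Rightarrow> nat) \<Rightarrow> bool \<Rightarrow> nat \<Rightarrow> (gel \<Rightarrow> complex) \<Rightarrow> gel \<Rightarrow> complex" where
  "genact N A b i \<xi> = conv N A (indicator (genset N A b i)) \<xi>"

fun wordact :: "nat \<Rightarrow> (nat \<Rightarrow> nat \<Rightarrow> nat) \<Rightarrow> (bool \<times> nat) list \<Rightarrow> (gel \<Rightarrow> complex) \<Rightarrow> gel \<Rightarrow> complex" where
  "wordact N A [] \<xi> = \<xi>"
| "wordact N A ((b, i) # w) \<xi> = genact N A b i (wordact N A w \<xi>)"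

(* a non-commutative *-polynomial in the S_i: linear combination of words *)
definition polyact :: "nat \<Rightarrow> (nat \<Rightarrow> nat \<Rightarrow> nat) \<Rightarrow> (complex \<times> (bool \<times> nat) list) list \<Rightarrow> (gel \<Rightarrow> complex) \<Rightarrow> gel \<Rightarrow> complex" where
  "polyact N A p \<xi> = (\<lambda>g. \<Sum>(c, w)\<leftarrow>p. c * wordact N A w \<xi> g)"

(* O_A (= C*_r(G_A)) as the operator-norm closure of the *-polynomials in the S_i on L^2(G_A) *)
definition OA :: "nat \<Rightarrow> (nat \<Rightarrow> nat \<Rightarrow> nat) \<Rightarrow> ((gel \<Rightarrow> complex) \<Rightarrow> (gel \<Rightarrow> complex)) set" where
  "OA N A = {T. (\<forall>\<xi>. L2 N A \<xi> \<longrightarrow> L2 N A (T \<xi>)) \<and>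
      (\<forall>\<epsilon>>0. \<exists>p. \<forall>\<xi>. L2 N A \<xi> \<longrightarrow>
          norm2sq N A (\<lambda>g. T \<xi> g - polyact N A p \<xi> g) \<le> ennreal (\<epsilon>\<^sup>2) * norm2sq N A \<xi>)}"

section \<open>The operator |D| = Delta + M_L\<close>

definition dmet :: "real \<Rightarrow> (nat \<Rightarrow> nat) \<Rightarrow> (nat \<Rightarrow> nat) \<Rightarrow> real" where
  "dmet lam x y = (if x = y then 0 else lam powr (- real (LEAST m. x m \<noteq> y m)))"

definition Lval :: "nat \<Rightarrow> (nat \<Rightarrow> nat \<Rightarrow> nat) \<Rightarrow> nat list \<times> nat list \<Rightarrow> real" where
  "Lval N A \<gamma> = ln (lamA N A) / tc N A * real (length (fst \<gamma>) + length (snd \<gamma>))"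

(* (Delta_gamma f)(g) for g in G_gamma: transport of Delta_{C(beta)} via s_gamma *)
definition Delta_piece :: "nat \<Rightarrow> (nat \<Rightarrow> nat \<Rightarrow> nat) \<Rightarrow> real \<Rightarrow> nat list \<times> nat list \<Rightarrow> (gel \<Rightarrow> complex) \<Rightarrow> gel \<Rightarrow> complex" where
  "Delta_piece N A lam \<gamma> f g = (\<integral>y. indicator (cyl N A (snd \<gamma>)) y *
      ((f g - f (sinv \<gamma> y)) / complex_of_real (dmet lam (src g) y powr log lam (lamA N A))) \<partial>muc N A)"

definition piece_of :: "nat \<Rightarrow> (nat \<Rightarrow> nat \<Rightarrow> nat) \<Rightarrow> gel \<Rightarrow> nat list \<times> nat list" where
  "piece_of N A g = (THE \<gamma>. \<gamma> \<in> IA N A \<and> g \<in> Gg N A \<gamma>)"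

definition absD :: "nat \<Rightarrow> (nat \<Rightarrow> nat \<Rightarrow> nat) \<Rightarrow> real \<Rightarrow> (gel \<Rightarrow> complex) \<Rightarrow> gel \<Rightarrow> complex" where
  "absD N A lam f g = (if g \<in> GA N A then
      (let \<gamma> = piece_of N A g in Delta_piece N A lam \<gamma> f g + complex_of_real (Lval N A \<gamma>) * f g)
    else 0)"

datatype bidx = Eg "nat list \<times> nat list" | Eh "nat list \<times> nat list" "nat list" nat

definition bidx_set :: "nat \<Rightarrow> (nat \<Rightarrow> nat \<Rightarrow> nat) \<Rightarrow> bidx set" where
  "bidx_set N A = Eg ` IA N A \<union>
     {Eh \<gamma> \<nu> j | \<gamma> \<nu> j. \<gamma> \<in> IA N A \<and> adm N A \<nu> \<and> (\<exists>w. \<nu> = snd \<gamma> @ w) \<and>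
        cc N A (last \<nu>) \<ge> 2 \<and> 1 \<le> j \<and> j \<le> cc N A (last \<nu>) - 1}"

definition valid_iota :: "nat \<Rightarrow> (nat \<Rightarrow> nat \<Rightarrow> nat) \<Rightarrow> (nat list \<Rightarrow> nat \<Rightarrow> nat) \<Rightarrow> bool" where
  "valid_iota N A iota \<longleftrightarrow> (\<forall>\<nu>. adm N A \<nu> \<and> \<nu> \<noteq> [] \<longrightarrow>
      bij_betw (iota \<nu>) {1..cc N A (last \<nu>)} (Cset N A (last \<nu>)))"

definition hfun :: "nat \<Rightarrow> (nat \<Rightarrow> nat \<Rightarrow> nat) \<Rightarrow> (nat list \<Rightarrow> nat \<Rightarrow> nat) \<Rightarrow> nat list \<Rightarrow> nat \<Rightarrow> (nat \<Rightarrow> nat) \<Rightarrow> real" where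
  "hfun N A iota \<nu> j y = (let l = last \<nu>; \<iota> = iota \<nu>;
      q = (\<lambda>m. \<Sum>k=1..m. Pm N A l (\<iota> k));
      mC = measure (muc N A) (cyl N A \<nu>);
      a = (\<lambda>k. if k \<le> j then sqrt (Pm N A l (\<iota> (Suc j)) / (mC * q j * q (Suc j)))
               else if k = Suc j then - sqrt (q j / (mC * q (Suc j) * Pm N A l (\<iota> (Suc j))))
               else 0)
    in \<Sum>k=1..cc N A l. a k * indicator (cyl N A (\<nu> @ [\<iota> k])) y)"

definition ebasis :: "nat \<Rightarrow> (nat \<Rightarrow> nat \<Rightarrow> nat) \<Rightarrow> (nat list \<Rightarrow> nat \<Rightarrow> nat) \<Rightarrow> bidx \<Rightarrow> gel \<Rightarrow> complex" where
  "ebasis N A iota b g = (case b of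
      Eg \<gamma> \<Rightarrow> (if g \<in> Gg N A \<gamma> then complex_of_real (1 / sqrt (measure (muc N A) (cyl N A (snd \<gamma>)))) else 0)
    | Eh \<gamma> \<nu> j \<Rightarrow> (if g \<in> Gg N A \<gamma> then complex_of_real (hfun N A iota \<nu> j (src g)) else 0))"

definition eigval :: "nat \<Rightarrow> (nat \<Rightarrow> nat \<Rightarrow> nat) \<Rightarrow> real \<Rightarrow> (nat list \<Rightarrow> nat \<Rightarrow> nat) \<Rightarrow> bidx \<Rightarrow> real" where
  "eigval N A lam iota b = (THE \<mu>. \<forall>g\<in>GA N A.
      absD N A lam (ebasis N A iota b) g = complex_of_real \<mu> * ebasis N A iota b g)"

definition rho :: "nat \<Rightarrow> (nat \<Rightarrow> nat \<Rightarrow> nat) \<Rightarrow> (nat list \<Rightarrow> nat \<Rightarrow> nat) \<Rightarrow> (nat \<Rightarrow> bidx) \<Rightarrow> nat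
                   \<Rightarrow> ((gel \<Rightarrow> complex) \<Rightarrow> (gel \<Rightarrow> complex)) \<Rightarrow> complex" where
  "rho N A iota enum n T = inner_G N A (ebasis N A iota (enum n)) (T (ebasis N A iota (enum n)))"

end

theory Submission
  imports Defs
begin

(* Test the states on the projections P_i = S_i S_i^*: they act on L^2(G_A) as
   multiplication by the indicator that the range point starts with the letter i.  Every basis
   vector is supported on one piece G_gamma, so rho_n(P_i) is 1 or 0 according to whether the head
   letter of that piece is i.  Weak* convergence along n_k therefore forces the head letters of
   e_(n_k) to be eventually a constant i0.
   On the other hand the eigenvalue of a basis vector depends only on the lengths of alpha, beta
   (and nu), and for a d-regular matrix the number of basis vectors with prescribed lengths and
   prescribed head letter is the same for every letter.  So every initial segment of the enumeration
   that ends at an eigenvalue jump is equidistributed over the N >= 2 letters, and at least half of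
   its indices have head letter different from i0.  The eigenvalues are unbounded, hence there are
   infinitely many jumps, which contradicts density one. *)

lemma convergent_zero_one_eventually_const:
  fixes g :: "nat \<Rightarrow> complex"
  assumes "convergent g" and "\<And>k. g k = 0 \<or> g k = 1"
  shows "\<exists>c. eventually (\<lambda>k. g k = c) sequentially"
proof -
  obtain K where K: "\<And>m n. m \<ge> K \<Longrightarrow> n \<ge> K \<Longrightarrow> dist (g m) (g n) < 1"
    using convergent_Cauchy[OF assms(1)] by (metis Cauchy_def zero_less_one)
  have "g k = g K" if "k \<ge> K" for k
    using K[OF that order.refl] assms(2)[of k] assms(2)[of K] by (auto simp: dist_norm)
  then show ?thesis
    unfolding eventually_sequentially by blast
qed

lemma mono_infinite_range_jumps:
  fixes e :: "nat \<Rightarrow> 'a::linorder"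
  assumes "mono e" and "infinite (range e)"
  shows "\<exists>M\<ge>Z. e M < e (Suc M)"
proof (rule ccontr)
  assume "\<not> ?thesis"
  then have step: "e (Suc M) = e M" if "M \<ge> Z" for M
    using that monoD[OF assms(1), of M "Suc M"] by fastforce
  have "e n = e Z" if "n \<ge> Z" for n
    using that by (induction n rule: dec_induct) (auto simp: step)
  then have "range e \<subseteq> e ` {..Z}"
    by (metis image_subsetI nle_le atMost_iff imageI)
  then show False
    using assms(2) finite_subset by blast
qed

lemma initial_segment_at_jump:
  fixes f :: "'b \<Rightarrow> 'c::linorder"
  assumes bij: "bij_betw enum UNIV B" and mono: "mono (\<lambda>n. f (enum n))"
    and jump: "f (enum M) < f (enum (Suc M))"
  shows "enum ` {..M} = {b \<in> B. f b \<le> f (enum M)}"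
proof (intro equalityI subsetI)
  fix b
  assume "b \<in> enum ` {..M}"
  then show "b \<in> {b \<in> B. f b \<le> f (enum M)}"
    using bij monoD[OF mono] by (auto simp: bij_betw_def)
next
  fix b
  assume b: "b \<in> {b \<in> B. f b \<le> f (enum M)}"
  then obtain n where n: "b = enum n"
    using bij by (auto simp: bij_betw_def)
  have "n \<le> M"
    using b n jump monoD[OF mono, of "Suc M" n] by (cases "n \<le> M") auto
  then show "b \<in> enum ` {..M}"
    using n by simp
qed

lemma sum_mult_if_eq:
  fixes a :: "nat \<Rightarrow> real"
  assumes "finite S" "k0 \<in> S"
  shows "(\<Sum>k\<in>S. a k * (if k = k0 then E else c)) = c * (\<Sum>k\<in>S. a k) + a k0 * (E - c)"
proof -
  have "(\<Sum>k\<in>S. a k * (if k = k0 then E else c)) = (\<Sum>k\<in>S. a k * c + (if k = k0 then a k * (E - c) else 0))"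
    by (intro sum.cong) (auto simp: algebra_simps)
  also have "\<dots> = c * (\<Sum>k\<in>S. a k) + a k0 * (E - c)"
    using assms by (simp add: sum.distrib sum_distrib_left mult.commute)
  finally show ?thesis .
qed

lemma density_one_subseq_not_eventually_in:
  assumes mono: "strict_mono nk"
    and density: "(\<lambda>M. real (card {k. nk k \<le> M}) / real M) \<longlonglongrightarrow> 1"
    and sparse: "\<forall>Z. \<exists>M\<ge>Z. Suc M \<le> 2 * card {n. n \<le> M \<and> n \<notin> S}"
  shows "\<not> eventually (\<lambda>k. nk k \<in> S) sequentially"
proof
  assume "eventually (\<lambda>k. nk k \<in> S) sequentially"
  then obtain K where K: "\<And>k. k \<ge> K \<Longrightarrow> nk k \<in> S"
    by (auto simp: eventually_sequentially)
  obtain Z where Z: "\<And>M. M \<ge> Z \<Longrightarrow> real (card {k. nk k \<le> M}) / real M > 3 / 4"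
    using order_tendstoD(1)[OF density, of "3 / 4"] by (auto simp: eventually_sequentially)
  obtain M where M: "M \<ge> max Z (4 * K + 2)" and bad: "Suc M \<le> 2 * card {n. n \<le> M \<and> n \<notin> S}"
    using sparse by blast
  define Bad where "Bad = {n. n \<le> M \<and> n \<notin> S}"
  define Late where "Late = {k. K \<le> k \<and> nk k \<le> M}"
  have Bad_sub: "Bad \<subseteq> {..M}"
    by (auto simp: Bad_def)
  have "Late \<subseteq> {..M}"
    using seq_suble[OF mono] by (auto simp: Late_def intro: le_trans)
  then have "finite Late"
    by (rule finite_subset) simp
  have "card Late = card (nk ` Late)"
    using strict_mono_imp_inj_on[OF mono] by (simp add: card_image inj_on_def)
  also have "\<dots> \<le> card ({..M} - Bad)"
    using K by (intro card_mono) (auto simp: Late_def Bad_def)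
  also have "\<dots> = Suc M - card Bad"
    using Bad_sub by (simp add: card_Diff_subset finite_subset)
  finally have late: "card Late \<le> Suc M - card Bad" .
  have "card {k. nk k \<le> M} \<le> card ({..<K} \<union> Late)"
    using \<open>finite Late\<close> by (intro card_mono) (auto simp: Late_def)
  also have "\<dots> \<le> K + card Late"
    using card_Un_le[of "{..<K}" Late] by simp
  finally have "2 * real (card {k. nk k \<le> M}) \<le> 2 * real K + real M + 1"
    using late bad unfolding Bad_def by linarith
  moreover have "4 * real (card {k. nk k \<le> M}) > 3 * real M"
    using Z[of M] M by (simp add: field_simps)
  ultimately show False
    using M by linarith
qed

section \<open>Admissible words and cylinders\<close>

lemma adm_iff_successively:
  "adm N A w \<longleftrightarrow> (\<forall>a\<in>set w. a < N) \<and> successively (\<lambda>a b. A a b = 1) w"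
  by (simp add: adm_def successively_conv_nth all_set_conv_all_nth)

lemma adm_Nil [simp]: "adm N A []"
  by (simp add: adm_def)

lemma adm_append:
  "adm N A (u @ v) \<longleftrightarrow> adm N A u \<and> adm N A v \<and> (u \<noteq> [] \<longrightarrow> v \<noteq> [] \<longrightarrow> A (last u) (hd v) = 1)"
  unfolding adm_iff_successively by (auto simp: successively_append_iff)

lemma adm_snoc: "adm N A (w @ [c]) \<longleftrightarrow> adm N A w \<and> c < N \<and> (w \<noteq> [] \<longrightarrow> A (last w) c = 1)"
  unfolding adm_append by (auto simp: adm_iff_successively)

lemma adm_rev: "adm N A (rev w) \<longleftrightarrow> adm N (\<lambda>i j. A j i) w"
  unfolding adm_iff_successively by (simp add: successively_rev)

lemma adm_nth_less: "adm N A w \<Longrightarrow> i < length w \<Longrightarrow> w ! i < N"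
  by (simp add: adm_def)

lemma adm_last_less: "adm N A w \<Longrightarrow> w \<noteq> [] \<Longrightarrow> last w < N"
  by (simp add: adm_def last_conv_nth)

lemma finite_adm_words: "finite {w. adm N A w \<and> length w = n}"
proof (rule finite_subset)
  show "{w. adm N A w \<and> length w = n} \<subseteq> {w. set w \<subseteq> {..<N} \<and> length w = n}"
    by (auto simp: adm_iff_successively)
qed (rule finite_lists_length_eq, simp)

lemma shiftk_apply [simp]: "shiftk k x n = x (n + k)"
  by (simp add: shiftk_def)

lemma shift1_apply [simp]: "shift1 x n = x (Suc n)"
  by (simp add: shift1_def)

lemma shiftk_in_OmegaA: "x \<in> OmegaA N A \<Longrightarrow> shiftk k x \<in> OmegaA N A"
  by (simp add: OmegaA_def)

lemma shift1_in_OmegaA: "x \<in> OmegaA N A \<Longrightarrow> shift1 x \<in> OmegaA N A"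
  by (simp add: OmegaA_def)

lemma prep_in_OmegaA:
  assumes "adm N A \<alpha>" and "z \<in> OmegaA N A" and "\<alpha> \<noteq> [] \<Longrightarrow> A (last \<alpha>) (z 0) = 1"
  shows "prep \<alpha> z \<in> OmegaA N A"
  unfolding OmegaA_def
proof safe
  fix n
  show "prep \<alpha> z n < N"
    using assms by (auto simp: prep_def adm_def OmegaA_def)
  consider "Suc n < length \<alpha>" | "Suc n = length \<alpha>" | "n \<ge> length \<alpha>"
    by linarith
  then show "A (prep \<alpha> z n) (prep \<alpha> z (Suc n)) = 1"
  proof cases
    case 2
    then have "\<alpha> \<noteq> []"
      by auto
    with 2 have "\<alpha> ! n = last \<alpha>"
      by (metis diff_Suc_1 last_conv_nth)
    with 2 \<open>\<alpha> \<noteq> []\<close> assms(3) show ?thesis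
      by (simp add: prep_def)
  next
    case 3
    then have "Suc n - length \<alpha> = Suc (n - length \<alpha>)"
      by simp
    with 3 assms(2) show ?thesis
      by (simp add: prep_def OmegaA_def)
  qed (use assms(1) in \<open>auto simp: prep_def adm_def\<close>)
qed

lemma in_cyl_iff: "x \<in> cyl N A w \<longleftrightarrow> x \<in> OmegaA N A \<and> map x [0..<length w] = w"
  unfolding cyl_def list_eq_iff_nth_eq by auto

lemma in_cyl_prefix: "x \<in> OmegaA N A \<Longrightarrow> x \<in> cyl N A (map x [0..<n])"
  by (simp add: in_cyl_iff)

lemma in_cyl_prefix_iff:
  "y \<in> OmegaA N A \<Longrightarrow> y \<in> cyl N A (map x [0..<m]) \<longleftrightarrow> (\<forall>i<m. y i = x i)"
  by (auto simp: cyl_def)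

lemma cyl_snoc: "x \<in> cyl N A (w @ [c]) \<longleftrightarrow> x \<in> cyl N A w \<and> x (length w) = c"
  unfolding cyl_def by (auto simp: nth_append less_Suc_eq)

lemma cyl_append_subset: "cyl N A (u @ v) \<subseteq> cyl N A u"
  by (auto simp: cyl_def nth_append)

lemma cyl_imp_adm:
  assumes "x \<in> cyl N A w"
  shows "adm N A w"
proof -
  have "w ! i = x i" if "i < length w" for i
    using assms that by (simp add: cyl_def)
  with assms show ?thesis
    by (auto simp: cyl_def OmegaA_def adm_def)
qed

lemma adm_prefix: "x \<in> OmegaA N A \<Longrightarrow> adm N A (map x [0..<n])"
  by (rule cyl_imp_adm[OF in_cyl_prefix])

lemma cyl_in_sets_MOmega: "cyl N A w \<in> sets (MOmega N A)"
proof -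
  have "Measurable.pred (PiM UNIV (\<lambda>_::nat. count_space (UNIV::nat set))) (\<lambda>x. \<forall>i<length w. x i = w ! i)"
    by measurable
  then have "{x. \<forall>i<length w. x i = w ! i} \<in> sets (PiM UNIV (\<lambda>_::nat. count_space (UNIV::nat set)))"
    by (simp add: pred_def space_PiM)
  moreover have "cyl N A w = OmegaA N A \<inter> {x. \<forall>i<length w. x i = w ! i}"
    by (auto simp: cyl_def)
  ultimately show ?thesis
    unfolding MOmega_def by (auto simp: sets_restrict_space)
qed

section \<open>The pieces of the groupoid\<close>

lemma src_sinv [simp]: "src (sinv \<gamma> y) = y"
  by (simp add: src_def sinv_def split: prod.splits)

lemma IA_D:
  assumes "(\<alpha>, \<beta>) \<in> IA N A"
  shows "adm N A \<alpha>" "adm N A \<beta>" "\<beta> \<noteq> []"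
    and "\<alpha> \<noteq> [] \<Longrightarrow> A (last \<alpha>) (last \<beta>) = 1"
    and "\<alpha> \<noteq> [] \<Longrightarrow> length \<beta> \<noteq> 1 \<Longrightarrow> last \<alpha> \<noteq> \<beta> ! (length \<beta> - 2)"
  using assms by (auto simp: IA_def)

lemma Gg_D:
  assumes "g \<in> Gg N A \<gamma>"
  shows "src g \<in> cyl N A (snd \<gamma>)" and "g = sinv \<gamma> (src g)"
  using assms by (auto simp: Gg_def sinv_def src_def split: prod.splits)

lemma range_sinv_in_OmegaA:
  assumes "(\<alpha>, \<beta>) \<in> IA N A" and y: "y \<in> cyl N A \<beta>"
  shows "prep \<alpha> (shiftk (length \<beta> - 1) y) \<in> OmegaA N A"
proof (rule prep_in_OmegaA)
  show "adm N A \<alpha>"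
    using IA_D(1)[OF assms(1)] .
  show "shiftk (length \<beta> - 1) y \<in> OmegaA N A"
    using y by (auto simp: cyl_def intro: shiftk_in_OmegaA)
  assume "\<alpha> \<noteq> []"
  moreover have "y (length \<beta> - 1) = last \<beta>"
    using y IA_D(3)[OF assms(1)] by (auto simp: cyl_def last_conv_nth)
  ultimately show "A (last \<alpha>) (shiftk (length \<beta> - 1) y 0) = 1"
    using IA_D(4)[OF assms(1)] by simp
qed

(* The side condition last \<alpha> \<noteq> \<beta> ! (length \<beta> - 2) of IA is what makes length \<beta> - 1
   the least lag. *)

lemma kappa_sinv:
  assumes g: "(\<alpha>, \<beta>) \<in> IA N A" and y: "y \<in> cyl N A \<beta>"
  shows "kappa (sinv (\<alpha>, \<beta>) y) = length \<beta> - 1"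
proof -
  let ?L = "length \<alpha>" and ?K = "length \<beta>"
  let ?x = "prep \<alpha> (shiftk (?K - 1) y)" and ?n = "int ?L - int ?K + 1"
  let ?P = "\<lambda>k::nat. int k \<ge> max 0 (- ?n) \<and> shiftk (nat (?n + int k)) ?x = shiftk k y"
  have K1: "?K \<ge> 1"
    using IA_D(3)[OF g] by (cases \<beta>) auto
  have "?P (?K - 1)"
  proof
    show "int (?K - 1) \<ge> max 0 (- ?n)"
      using K1 by auto
    have "nat (?n + int (?K - 1)) = ?L"
      using K1 by auto
    then show "shiftk (nat (?n + int (?K - 1))) ?x = shiftk (?K - 1) y"
      by (auto simp: fun_eq_iff prep_def)
  qed
  moreover have "?K - 1 \<le> k" if Pk: "?P k" for k
  proof (rule ccontr)
    assume "\<not> ?K - 1 \<le> k"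
    then have kl: "k < ?K - 1"
      by simp
    have "int k \<ge> - ?n"
      using Pk by simp
    then have L1: "?L \<ge> 1"
      using kl by linarith
    then have ane: "\<alpha> \<noteq> []"
      by auto
    define p where "p = nat (?n + int k)"
    have p: "p + (?K - 2 - k) = ?L - 1"
      using \<open>int k \<ge> - ?n\<close> kl L1 unfolding p_def by linarith
    have "shiftk p ?x (?K - 2 - k) = shiftk k y (?K - 2 - k)"
      using Pk p_def by simp
    then have "?x (?L - 1) = y (?K - 2)"
      using p kl by (simp add: add.commute)
    moreover have "?x (?L - 1) = last \<alpha>"
      using L1 ane by (simp add: prep_def last_conv_nth)
    moreover have "y (?K - 2) = \<beta> ! (?K - 2)"
      using y kl by (auto simp: cyl_def)
    moreover have "?K \<noteq> 1"
      using kl by simp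
    ultimately show False
      using IA_D(5)[OF g ane] by simp
  qed
  ultimately have "(LEAST k. ?P k) = ?K - 1"
    by (rule Least_equality)
  then show ?thesis
    by (simp add: kappa_def sinv_def)
qed

lemma sinv_in_Gg:
  assumes "\<gamma> \<in> IA N A" and "y \<in> cyl N A (snd \<gamma>)"
  shows "sinv \<gamma> y \<in> Gg N A \<gamma>"
  using assms kappa_sinv[where \<alpha>="fst \<gamma>" and \<beta>="snd \<gamma>" and y=y] by (auto simp: Gg_def sinv_def split: prod.splits)

lemma sinv_in_GA:
  assumes g: "(\<alpha>, \<beta>) \<in> IA N A" and y: "y \<in> cyl N A \<beta>"
  shows "sinv (\<alpha>, \<beta>) y \<in> GA N A"
proof -
  have K1: "length \<beta> \<ge> 1"
    using IA_D(3)[OF g] by (cases \<beta>) auto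
  let ?n = "int (length \<alpha>) - int (length \<beta>) + 1"
  have e: "nat (?n + int (length \<beta> - 1)) = length \<alpha>"
    using K1 by auto
  have "?n + int (length \<beta> - 1) \<ge> 0 \<and>
     shiftk (nat (?n + int (length \<beta> - 1))) (prep \<alpha> (shiftk (length \<beta> - 1) y)) = shiftk (length \<beta> - 1) y"
    unfolding e using K1 by (auto simp: fun_eq_iff prep_def)
  then show ?thesis
    using range_sinv_in_OmegaA[OF g y] y by (auto simp: GA_def sinv_def cyl_def)
qed

lemma Gg_disjoint:
  assumes "g \<in> Gg N A \<gamma>" "g \<in> Gg N A \<gamma>'" "\<gamma> \<in> IA N A" "\<gamma>' \<in> IA N A"
  shows "\<gamma> = \<gamma>'"
proof -
  obtain \<alpha> \<beta> \<alpha>' \<beta>' where ab: "\<gamma> = (\<alpha>, \<beta>)" "\<gamma>' = (\<alpha>', \<beta>')"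
    by (cases \<gamma>, cases \<gamma>')
  obtain x n y where g: "g = (x, n, y)"
    by (cases g) auto
  have h: "y \<in> cyl N A \<beta>" "x = prep \<alpha> (shiftk (length \<beta> - 1) y)"
     "n = int (length \<alpha>) - int (length \<beta>) + 1" "kappa (x, n, y) = length \<beta> - 1"
    using assms(1) unfolding ab g Gg_def by auto
  have h': "y \<in> cyl N A \<beta>'" "x = prep \<alpha>' (shiftk (length \<beta>' - 1) y)"
     "n = int (length \<alpha>') - int (length \<beta>') + 1" "kappa (x, n, y) = length \<beta>' - 1"
    using assms(2) unfolding ab g Gg_def by auto
  have "\<beta> \<noteq> []" "\<beta>' \<noteq> []"
    using assms(3,4) ab by (auto simp: IA_def)
  with h(4) h'(4) have lb: "length \<beta> = length \<beta>'"
    by (cases \<beta>; cases \<beta>') auto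
  with h(1) h'(1) have "\<beta> = \<beta>'"
    by (simp add: in_cyl_iff)
  moreover have la: "length \<alpha> = length \<alpha>'"
    using h(3) h'(3) lb by simp
  have "\<alpha> = \<alpha>'"
  proof (rule nth_equalityI[OF la])
    fix i
    assume "i < length \<alpha>"
    then show "\<alpha> ! i = \<alpha>' ! i"
      using fun_cong[OF trans[OF h(2)[symmetric] h'(2)], of i] la by (simp add: prep_def)
  qed
  ultimately show ?thesis
    using ab by simp
qed

lemma kappa_least:
  assumes "(x, n, y) \<in> GA N A"
  defines "P \<equiv> \<lambda>k::nat. int k \<ge> max 0 (- n) \<and> shiftk (nat (n + int k)) x = shiftk k y"
  shows "P (kappa (x, n, y))" and "\<And>k. P k \<Longrightarrow> kappa (x, n, y) \<le> k"
proof -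
  obtain k where k: "n + int k \<ge> 0" "shiftk (nat (n + int k)) x = shiftk k y"
    using assms(1) by (auto simp: GA_def)
  then have "P k"
    by (auto simp: P_def)
  moreover have "kappa (x, n, y) = (LEAST k. P k)"
    by (simp add: kappa_def P_def)
  ultimately show "P (kappa (x, n, y))" "\<And>k. P k \<Longrightarrow> kappa (x, n, y) \<le> k"
    by (auto intro: LeastI Least_le)
qed

lemma kappa_shift:
  assumes g: "(x, n, y) \<in> GA N A"
  shows "n + int (kappa (x, n, y)) \<ge> 0" and "x (j + nat (n + int (kappa (x, n, y)))) = y (j + kappa (x, n, y))"
proof -
  have P: "int (kappa (x, n, y)) \<ge> max 0 (- n)"
      "shiftk (nat (n + int (kappa (x, n, y)))) x = shiftk (kappa (x, n, y)) y"
    using kappa_least(1)[OF g] by auto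
  then show "n + int (kappa (x, n, y)) \<ge> 0"
    by simp
  from fun_cong[OF P(2), of j] show "x (j + nat (n + int (kappa (x, n, y)))) = y (j + kappa (x, n, y))"
    by simp
qed

lemma kappa_letters_differ:
  assumes g: "(x, n, y) \<in> GA N A" and k1: "kappa (x, n, y) \<ge> 1" and m1: "n + int (kappa (x, n, y)) \<ge> 1"
  shows "x (nat (n + int (kappa (x, n, y))) - 1) \<noteq> y (kappa (x, n, y) - 1)"
proof
  define k0 where "k0 = kappa (x, n, y)"
  define m where "m = nat (n + int k0)"
  assume "x (nat (n + int (kappa (x, n, y))) - 1) = y (kappa (x, n, y) - 1)"
  then have "x (j + (m - 1)) = y (j + (k0 - 1))" for j
    using kappa_shift(2)[OF g, of "j - 1"] k1 m1 by (cases j) (simp_all add: k0_def m_def)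
  moreover have "nat (n + int (k0 - 1)) = m - 1"
    using k1 m1 by (simp add: k0_def m_def)
  ultimately have "int (k0 - 1) \<ge> max 0 (- n) \<and> shiftk (nat (n + int (k0 - 1))) x = shiftk (k0 - 1) y"
    using k1 m1 by (auto simp: fun_eq_iff k0_def)
  then have "k0 \<le> k0 - 1"
    unfolding k0_def by (rule kappa_least(2)[OF g])
  then show False
    using k1 by (simp add: k0_def)
qed

lemma GA_in_Gg_prefixes:
  assumes g: "(x, n, y) \<in> GA N A"
  defines "k0 \<equiv> kappa (x, n, y)"
  defines "\<alpha> \<equiv> map x [0..<nat (n + int k0)]" and "\<beta> \<equiv> map y [0..<Suc k0]"
  shows "(\<alpha>, \<beta>) \<in> IA N A" and "(x, n, y) \<in> Gg N A (\<alpha>, \<beta>)"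
proof -
  have xo: "x \<in> OmegaA N A" and yo: "y \<in> OmegaA N A"
    using g by (auto simp: GA_def)
  define m where "m = nat (n + int k0)"
  have m: "int m = n + int k0"
    using kappa_shift(1)[OF g] unfolding m_def k0_def by auto
  have shx: "x (j + m) = y (j + k0)" for j
    using kappa_shift(2)[OF g] by (simp add: m_def k0_def)
  have lb: "length \<beta> = Suc k0" and la: "length \<alpha> = m"
    by (auto simp: \<beta>_def \<alpha>_def m_def)
  have "x = prep \<alpha> (shiftk (length \<beta> - 1) y)"
  proof
    fix j
    show "x j = prep \<alpha> (shiftk (length \<beta> - 1) y) j"
      using shx[of "j - m"] by (cases "j < m") (simp_all add: prep_def \<alpha>_def m_def la lb)
  qed
  moreover have "y \<in> cyl N A \<beta>"
    unfolding \<beta>_def by (rule in_cyl_prefix[OF yo])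
  moreover have "n = int (length \<alpha>) - int (length \<beta>) + 1" and "kappa (x, n, y) = length \<beta> - 1"
    using m la lb by (simp_all add: k0_def)
  ultimately show "(x, n, y) \<in> Gg N A (\<alpha>, \<beta>)"
    by (simp add: Gg_def)
  have "A (last \<alpha>) (last \<beta>) = 1 \<and> (length \<beta> = 1 \<or> last \<alpha> \<noteq> \<beta> ! (length \<beta> - 2))"
    if "\<alpha> \<noteq> []"
  proof
    have m1: "m \<ge> 1"
      using that la by (cases \<alpha>) auto
    have last_\<alpha>: "last \<alpha> = x (m - 1)"
      using m1 by (simp add: \<alpha>_def m_def last_map)
    have "A (x (m - 1)) (x (Suc (m - 1))) = 1"
      using xo by (simp add: OmegaA_def)
    then show "A (last \<alpha>) (last \<beta>) = 1"
      using last_\<alpha> shx[of 0] m1 by (simp add: \<beta>_def)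
    show "length \<beta> = 1 \<or> last \<alpha> \<noteq> \<beta> ! (length \<beta> - 2)"
    proof (rule ccontr)
      assume "\<not> ?thesis"
      then have "k0 \<ge> 1" "x (m - 1) = y (k0 - 1)"
        using lb last_\<alpha> by (auto simp: \<beta>_def nth_append simp del: upt_Suc)
      moreover have "n + int k0 \<ge> 1"
        using m m1 by simp
      ultimately show False
        using kappa_letters_differ[OF g] by (simp add: k0_def m_def)
    qed
  qed
  moreover have "adm N A \<alpha>" "adm N A \<beta>"
    unfolding \<alpha>_def \<beta>_def by (rule adm_prefix[OF xo], rule adm_prefix[OF yo])
  ultimately show "(\<alpha>, \<beta>) \<in> IA N A"
    using lb by (auto simp: IA_def)
qed

lemma piece_of_eq: "\<gamma> \<in> IA N A \<Longrightarrow> g \<in> Gg N A \<gamma> \<Longrightarrow> piece_of N A g = \<gamma>"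
  unfolding piece_of_def using Gg_disjoint by blast

lemma piece_of_in_IA:
  assumes "g \<in> GA N A"
  shows "piece_of N A g \<in> IA N A" and "g \<in> Gg N A (piece_of N A g)"
proof -
  obtain x n y where "g = (x, n, y)"
    by (cases g) auto
  then obtain \<gamma> where "\<gamma> \<in> IA N A" "g \<in> Gg N A \<gamma>"
    using GA_in_Gg_prefixes assms by metis
  then show "piece_of N A g \<in> IA N A" and "g \<in> Gg N A (piece_of N A g)"
    using piece_of_eq by simp_all
qed

section \<open>The projections S_i S_i^*\<close>

lemma S_arrow_in_GA: "x \<in> OmegaA N A \<Longrightarrow> (x, 1, shift1 x) \<in> GA N A"
  unfolding GA_def using shift1_in_OmegaA by (auto intro!: exI[of _ 0] simp: fun_eq_iff)

lemma S_star_arrow_in_GA: "x \<in> OmegaA N A \<Longrightarrow> (shift1 x, -1, x) \<in> GA N A"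
  unfolding GA_def using shift1_in_OmegaA by (auto intro!: exI[of _ 1] simp: fun_eq_iff)

lemma genact_S:
  assumes x: "x \<in> OmegaA N A"
  shows "genact N A True i \<xi> (x, n, y) = (if x 0 = i then \<xi> (shift1 x, n - 1, y) else 0)"
proof -
  let ?f = "\<lambda>h. indicator (genset N A True i) h * \<xi> (gmul (ginv h) (x, n, y))"
  let ?h0 = "(x, 1::int, shift1 x)"
  have "genact N A True i \<xi> (x, n, y) = infsum ?f {h \<in> GA N A. fst h = x}"
    by (simp add: genact_def conv_def)
  also have "\<dots> = infsum ?f (if x 0 = i then {?h0} else {})"
  proof (rule infsum_cong_neutral)
    fix h
    assume h: "h \<in> {h \<in> GA N A. fst h = x} - (if x 0 = i then {?h0} else {})"
    show "?f h = 0"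
    proof (cases "h \<in> genset N A True i")
      case True
      then obtain x' where "h = (x', 1, shift1 x')" "x' \<in> cyl N A [i]"
        by (auto simp: genset_def)
      with h show ?thesis
        by (auto simp: cyl_def)
    qed simp
  next
    fix h
    assume "h \<in> (if x 0 = i then {?h0} else {}) - {h \<in> GA N A. fst h = x}"
    then show "?f h = 0"
      using S_arrow_in_GA[OF x] by (auto split: if_splits)
  qed simp
  also have "\<dots> = (if x 0 = i then \<xi> (shift1 x, n - 1, y) else 0)"
  proof (cases "x 0 = i")
    case True
    then have "?h0 \<in> genset N A True i"
      using x by (auto simp: genset_def cyl_def)
    with True show ?thesis
      by (simp add: gmul_def ginv_def)
  qed simp
  finally show ?thesis .
qed

lemma genact_S_star:
  assumes x: "x \<in> OmegaA N A" and xi: "x 0 = i"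
  shows "genact N A False i \<xi> (shift1 x, m, y) = \<xi> (x, m + 1, y)"
proof -
  let ?f = "\<lambda>h. indicator (genset N A False i) h * \<xi> (gmul (ginv h) (shift1 x, m, y))"
  let ?h0 = "(shift1 x, -1::int, x)"
  have "genact N A False i \<xi> (shift1 x, m, y) = infsum ?f {h \<in> GA N A. fst h = shift1 x}"
    by (simp add: genact_def conv_def)
  also have "\<dots> = infsum ?f {?h0}"
  proof (rule infsum_cong_neutral)
    fix h
    assume h: "h \<in> {h \<in> GA N A. fst h = shift1 x} - {?h0}"
    show "?f h = 0"
    proof (cases "h \<in> genset N A False i")
      case True
      then obtain x' where h': "h = (shift1 x', -1, x')" "x' \<in> cyl N A [i]"
        by (auto simp: genset_def)
      have "shift1 x' = shift1 x"
        using h h' by simp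
      then have "x' (Suc k) = x (Suc k)" for k
        by (metis shift1_apply)
      moreover have "x' 0 = x 0"
        using h'(2) xi by (simp add: cyl_def)
      ultimately have "x' = x"
        by (metis fun_eq_iff not0_implies_Suc)
      with h h' show ?thesis
        by simp
    qed simp
  next
    fix h
    assume "h \<in> {?h0} - {h \<in> GA N A. fst h = shift1 x}"
    then show "?f h = 0"
      using S_star_arrow_in_GA[OF x] by auto
  qed simp
  also have "\<dots> = \<xi> (x, m + 1, y)"
  proof -
    have "?h0 \<in> genset N A False i"
      using xi x by (auto simp: genset_def cyl_def)
    then show ?thesis
      by (simp add: gmul_def ginv_def add.commute)
  qed
  finally show ?thesis .
qed

definition proj_word :: "nat \<Rightarrow> (bool \<times> nat) list" where
  "proj_word i = [(True, i), (False, i)]"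

lemma proj_word_apply:
  assumes "x \<in> OmegaA N A"
  shows "wordact N A (proj_word i) \<xi> (x, n, y) = (if x 0 = i then \<xi> (x, n, y) else 0)"
proof -
  have "wordact N A (proj_word i) \<xi> (x, n, y) = genact N A True i (genact N A False i \<xi>) (x, n, y)"
    by (simp add: proj_word_def)
  also have "\<dots> = (if x 0 = i then genact N A False i \<xi> (shift1 x, n - 1, y) else 0)"
    by (rule genact_S[OF assms])
  also have "\<dots> = (if x 0 = i then \<xi> (x, n, y) else 0)"
    using genact_S_star[OF assms, of i \<xi> "n - 1" y] by simp
  finally show ?thesis .
qed

definition head_letter :: "nat list \<times> nat list \<Rightarrow> nat" where
  "head_letter \<gamma> = (if fst \<gamma> \<noteq> [] then hd (fst \<gamma>) else last (snd \<gamma>))"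

lemma head_letter_less:
  assumes "\<gamma> \<in> IA N A"
  shows "head_letter \<gamma> < N"
proof -
  obtain \<alpha> \<beta> where ab: "\<gamma> = (\<alpha>, \<beta>)"
    by (cases \<gamma>)
  show ?thesis
    using IA_D[OF assms[unfolded ab]] adm_last_less[of N A \<beta>] adm_nth_less[of N A \<alpha> 0]
    by (simp add: ab head_letter_def hd_conv_nth)
qed

lemma range_sinv_head:
  assumes g: "\<gamma> \<in> IA N A" and y: "y \<in> cyl N A (snd \<gamma>)"
  shows "fst (sinv \<gamma> y) 0 = head_letter \<gamma>"
proof -
  obtain \<alpha> \<beta> where ab: "\<gamma> = (\<alpha>, \<beta>)"
    by (cases \<gamma>)
  have "y (length \<beta> - 1) = last \<beta>"
    using y IA_D(3) g ab by (auto simp: cyl_def last_conv_nth)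
  then show ?thesis
    using ab by (auto simp: head_letter_def sinv_def prep_def hd_conv_nth)
qed

lemma proj_word_sinv:
  assumes g: "\<gamma> \<in> IA N A" and y: "y \<in> cyl N A (snd \<gamma>)"
  shows "wordact N A (proj_word i) \<xi> (sinv \<gamma> y) = (if head_letter \<gamma> = i then \<xi> (sinv \<gamma> y) else 0)"
proof -
  have "fst (sinv \<gamma> y) \<in> OmegaA N A"
    using range_sinv_in_OmegaA g y by (cases \<gamma>) (simp add: sinv_def)
  then show ?thesis
    using proj_word_apply[of "fst (sinv \<gamma> y)"] range_sinv_head[OF g y] by (cases "sinv \<gamma> y") auto
qed

lemma L2_proj_word:
  assumes L: "L2 N A \<xi>"
  shows "L2 N A (wordact N A (proj_word i) \<xi>)"
  unfolding L2_def
proof (intro conjI ballI)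
  fix \<gamma>
  assume g: "\<gamma> \<in> IA N A"
  have "(\<lambda>y. indicator (cyl N A (snd \<gamma>)) y * \<xi> (sinv \<gamma> y)) \<in> borel_measurable (muc N A)"
    using L g unfolding L2_def by blast
  then have "(\<lambda>y. (if head_letter \<gamma> = i then 1 else 0) * (indicator (cyl N A (snd \<gamma>)) y * \<xi> (sinv \<gamma> y)))
      \<in> borel_measurable (muc N A)"
    by (rule borel_measurable_times[OF borel_measurable_const])
  moreover have "(\<lambda>y. indicator (cyl N A (snd \<gamma>)) y * wordact N A (proj_word i) \<xi> (sinv \<gamma> y)) =
      (\<lambda>y. (if head_letter \<gamma> = i then 1 else 0) * (indicator (cyl N A (snd \<gamma>)) y * \<xi> (sinv \<gamma> y)))"
  proof
    fix y
    show "indicator (cyl N A (snd \<gamma>)) y * wordact N A (proj_word i) \<xi> (sinv \<gamma> y) =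
      (if head_letter \<gamma> = i then 1 else 0) * (indicator (cyl N A (snd \<gamma>)) y * \<xi> (sinv \<gamma> y))"
      by (cases "y \<in> cyl N A (snd \<gamma>)") (simp_all add: proj_word_sinv[OF g])
  qed
  ultimately show "(\<lambda>y. indicator (cyl N A (snd \<gamma>)) y * wordact N A (proj_word i) \<xi> (sinv \<gamma> y))
      \<in> borel_measurable (muc N A)"
    by (simp only:)
next
  have "norm2sq N A (wordact N A (proj_word i) \<xi>) \<le> norm2sq N A \<xi>"
    unfolding norm2sq_def
  proof (intro nn_integral_mono)
    fix \<gamma> y
    assume "\<gamma> \<in> space (count_space (IA N A))"
    then have g: "\<gamma> \<in> IA N A"
      by simp
    show "indicator (cyl N A (snd \<gamma>)) y * ennreal ((cmod (wordact N A (proj_word i) \<xi> (sinv \<gamma> y)))\<^sup>2)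
        \<le> indicator (cyl N A (snd \<gamma>)) y * ennreal ((cmod (\<xi> (sinv \<gamma> y)))\<^sup>2)"
      by (cases "y \<in> cyl N A (snd \<gamma>)") (simp_all add: proj_word_sinv[OF g])
  qed
  then show "norm2sq N A (wordact N A (proj_word i) \<xi>) < \<infinity>"
    using L unfolding L2_def by (meson le_less_trans)
qed

lemma proj_word_in_OA: "wordact N A (proj_word i) \<in> OA N A"
  unfolding OA_def
proof (intro CollectI conjI allI impI)
  show "L2 N A \<xi> \<Longrightarrow> L2 N A (wordact N A (proj_word i) \<xi>)" for \<xi>
    by (rule L2_proj_word)
  have "(\<lambda>g. wordact N A (proj_word i) \<xi> g - polyact N A [(1, proj_word i)] \<xi> g) = (\<lambda>g. 0)" for \<xi>
    by (simp add: polyact_def)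
  then show "\<exists>p. \<forall>\<xi>. L2 N A \<xi> \<longrightarrow> norm2sq N A (\<lambda>g. wordact N A (proj_word i) \<xi> g - polyact N A p \<xi> g)
      \<le> ennreal (\<epsilon>\<^sup>2) * norm2sq N A \<xi>" for \<epsilon>
    by (intro exI[of _ "[(1, proj_word i)]"]) (simp add: norm2sq_def)
qed

section \<open>Regular matrices\<close>

lemma sum_zero_one_eq_card:
  fixes f :: "nat \<Rightarrow> nat"
  assumes "\<forall>j<N. f j \<in> {0, 1}"
  shows "(\<Sum>j<N. f j) = card {j. j < N \<and> f j = 1}"
proof -
  have "(\<Sum>j<N. f j) = (\<Sum>j<N. if f j = 1 then 1 else 0)"
    using assms by (intro sum.cong) auto
  also have "\<dots> = card ({..<N} \<inter> {j. f j = 1})"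
    by (simp add: sum.If_cases)
  finally show ?thesis
    by (simp add: Int_def conj_commute)
qed

lemma card_adm_extensions:
  assumes out: "\<forall>i<N. card {j. j < N \<and> A i j = 1} = d" and \<nu>: "adm N A \<nu>" "\<nu> \<noteq> []"
  shows "card {w. adm N A (\<nu> @ w) \<and> length w = n} = d ^ n"
proof (induction n)
  case 0
  have "{w. adm N A (\<nu> @ w) \<and> length w = 0} = {[]}"
    using \<nu> by auto
  then show ?case
    by simp
next
  case (Suc n)
  let ?S = "{w. adm N A (\<nu> @ w) \<and> length w = n}"
  let ?C = "\<lambda>w. {c. c < N \<and> A (last (\<nu> @ w)) c = 1}"
  have fin: "finite ?S"
    by (rule finite_subset[OF _ finite_adm_words[of N A n]]) (auto simp: adm_append)
  have "{w. adm N A (\<nu> @ w) \<and> length w = Suc n} = (\<lambda>(w, c). w @ [c]) ` Sigma ?S ?C"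
  proof (intro equalityI subsetI)
    fix w
    assume w: "w \<in> {w. adm N A (\<nu> @ w) \<and> length w = Suc n}"
    then have "w \<noteq> []"
      by auto
    then have w_eq: "w = butlast w @ [last w]"
      by simp
    with w have "adm N A ((\<nu> @ butlast w) @ [last w])"
      by (metis (mono_tags, lifting) append_assoc mem_Collect_eq)
    then have "adm N A (\<nu> @ butlast w)" "last w < N" "A (last (\<nu> @ butlast w)) (last w) = 1"
      using \<nu>(2) unfolding adm_snoc by auto
    then have "butlast w \<in> ?S" "last w \<in> ?C (butlast w)"
      using w by auto
    with w_eq show "w \<in> (\<lambda>(w, c). w @ [c]) ` Sigma ?S ?C"
      by (intro image_eqI[of _ _ "(butlast w, last w)"]) auto
  next
    fix z
    assume "z \<in> (\<lambda>(w, c). w @ [c]) ` Sigma ?S ?C"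
    then obtain w c where "z = w @ [c]" "w \<in> ?S" "c \<in> ?C w"
      by auto
    with \<nu>(2) show "z \<in> {w. adm N A (\<nu> @ w) \<and> length w = Suc n}"
      using adm_snoc[of N A "\<nu> @ w" c] by simp
  qed
  moreover have "inj_on (\<lambda>(w, c). w @ [c]) (Sigma ?S ?C)"
    by (auto simp: inj_on_def)
  moreover have "card (?C w) = d" if "w \<in> ?S" for w
    using that out adm_last_less[of N A "\<nu> @ w"] \<nu>(2) by auto
  ultimately show ?case
    using Suc fin by (simp add: card_image card_SigmaI)
qed

lemma card_adm_words_hd:
  assumes out: "\<forall>i<N. card {j. j < N \<and> A i j = 1} = d" and i: "i < N"
  shows "card {w. adm N A w \<and> length w = Suc n \<and> hd w = i} = d ^ n"
proof -
  have "{w. adm N A w \<and> length w = Suc n \<and> hd w = i} = (Cons i) ` {w. adm N A ([i] @ w) \<and> length w = n}"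
    by (auto simp: length_Suc_conv)
  moreover have "adm N A [i]"
    using i by (simp add: adm_def)
  ultimately show ?thesis
    using card_adm_extensions[OF out, of "[i]" n] by (simp add: card_image)
qed

locale regular_shift =
  fixes N d :: nat and A :: "nat \<Rightarrow> nat \<Rightarrow> nat"
  assumes zero_one: "\<forall>i<N. \<forall>j<N. A i j \<in> {0, 1}"
    and prim: "primitive N A"
    and d_ge_2: "d \<ge> 2"
    and row_sums: "\<forall>i<N. (\<Sum>j<N. A i j) = d"
    and col_sums: "\<forall>j<N. (\<Sum>i<N. A i j) = d"
begin

lemma card_successors:
  assumes "i < N"
  shows "card {j. j < N \<and> A i j = 1} = d"
proof -
  have "(\<Sum>j<N. A i j) = card {j. j < N \<and> A i j = 1}"
    by (rule sum_zero_one_eq_card) (use zero_one assms in auto)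
  with row_sums assms show ?thesis
    by simp
qed

lemma card_predecessors:
  assumes "j < N"
  shows "card {i. i < N \<and> A i j = 1} = d"
proof -
  have "(\<Sum>i<N. A i j) = card {i. i < N \<and> A i j = 1}"
    by (rule sum_zero_one_eq_card) (use zero_one assms in auto)
  with col_sums assms show ?thesis
    by simp
qed

lemma card_Cset: "i < N \<Longrightarrow> card (Cset N A i) = d"
  unfolding Cset_def by (rule card_successors)

lemma cc_eq: "i < N \<Longrightarrow> cc N A i = d"
  by (simp add: cc_def card_Cset)

lemma N_pos: "N > 0"
  using prim by (simp add: primitive_def)

lemma N_ge_2: "N \<ge> 2"
proof -
  have "card (Cset N A 0) \<le> card {..<N}"
    by (intro card_mono) (auto simp: Cset_def)
  then show ?thesis
    using card_Cset[OF N_pos] d_ge_2 by simp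
qed

lemma card_adm_words_last:
  assumes "e < N"
  shows "card {w. adm N A w \<and> length w = Suc n \<and> last w = e} = d ^ n"
proof -
  let ?L = "{w. adm N A w \<and> length w = Suc n \<and> last w = e}"
  let ?H = "{w. adm N (\<lambda>i j. A j i) w \<and> length w = Suc n \<and> hd w = e}"
  have image: "rev ` ?L = ?H"
  proof (intro equalityI subsetI)
    fix v
    assume "v \<in> rev ` ?L"
    then obtain w where "v = rev w" "w \<in> ?L"
      by blast
    then show "v \<in> ?H"
      using adm_rev[of N A v] by (simp add: hd_rev)
  next
    fix v
    assume "v \<in> ?H"
    then have "rev v \<in> ?L"
      using adm_rev[of N A v] by (simp add: last_rev)
    then show "v \<in> rev ` ?L"
      by (rule rev_image_eqI) simp
  qed
  have "card (rev ` ?L) = card ?L"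
    by (rule card_image) (simp add: inj_on_def)
  then have "card ?L = card ?H"
    by (simp add: image)
  also have "\<dots> = d ^ n"
    using card_adm_words_hd[of N "\<lambda>i j. A j i"] card_predecessors assms by simp
  finally show ?thesis .
qed

lemma card_adm_words_last_in:
  assumes "E \<subseteq> {..<N}"
  shows "card {w. adm N A w \<and> length w = Suc m \<and> last w \<in> E} = card E * d ^ m"
proof -
  have "finite E"
    using assms finite_subset by blast
  have "{w. adm N A w \<and> length w = Suc m \<and> last w \<in> E} =
      (\<Union>e\<in>E. {w. adm N A w \<and> length w = Suc m \<and> last w = e})"
    by auto
  also have "card \<dots> = (\<Sum>e\<in>E. card {w. adm N A w \<and> length w = Suc m \<and> last w = e})"
  proof (rule card_UN_disjoint[OF \<open>finite E\<close>])
    show "\<forall>e\<in>E. finite {w. adm N A w \<and> length w = Suc m \<and> last w = e}"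
      by (intro ballI finite_subset[OF _ finite_adm_words[of N A "Suc m"]]) auto
  qed auto
  also have "\<dots> = (\<Sum>e\<in>E. d ^ m)"
    using assms card_adm_words_last by (intro sum.cong) auto
  also have "\<dots> = card E * d ^ m"
    by simp
  finally show ?thesis .
qed

lemma lamA_eq: "lamA N A = real d"
  unfolding lamA_def
proof (rule the_equality)
  have "(\<Sum>j<N. real (A i j) * 1) = real d * 1" if "i < N" for i
    using row_sums that by (simp flip: of_nat_sum)
  then show "real d > 0 \<and> (\<exists>u::nat \<Rightarrow> real. (\<forall>i<N. u i > 0) \<and>
      (\<forall>i<N. (\<Sum>j<N. real (A i j) * u j) = real d * u i))"
    using d_ge_2 by (intro conjI exI[of _ "\<lambda>_. 1"]) auto
next
  fix l
  assume "l > 0 \<and> (\<exists>u::nat \<Rightarrow> real. (\<forall>i<N. u i > 0) \<and> (\<forall>i<N. (\<Sum>j<N. real (A i j) * u j) = l * u i))"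
  then obtain u where pos: "\<forall>i<N. u i > 0" and eig: "\<forall>i<N. (\<Sum>j<N. real (A i j) * u j) = l * u i"
    by blast
  \<comment> \<open>sum the eigen-equation over i and use the column sums\<close>
  have "l * (\<Sum>i<N. u i) = (\<Sum>i<N. \<Sum>j<N. real (A i j) * u j)"
    using eig by (simp add: sum_distrib_left)
  also have "\<dots> = (\<Sum>j<N. real (\<Sum>i<N. A i j) * u j)"
    by (subst sum.swap) (simp add: sum_distrib_right)
  also have "\<dots> = real d * (\<Sum>i<N. u i)"
    using col_sums by (simp add: sum_distrib_left)
  finally show "l = real d"
    using sum_pos[of "{..<N}" u] pos N_pos by (simp add: lessThan_empty_iff)
qed

lemma reachable_closed:
  assumes closed: "\<forall>i<N. \<forall>j<N. A i j = 1 \<longrightarrow> i \<in> S \<longrightarrow> j \<in> S" and "i \<in> S"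
  shows "j < N \<Longrightarrow> Apow N A k i j > 0 \<Longrightarrow> j \<in> S"
proof (induction k arbitrary: j)
  case 0
  then show ?case
    using assms(2) by (auto split: if_splits)
next
  case (Suc k)
  have "\<exists>l\<in>{..<N}. Apow N A k i l * A l j \<noteq> 0"
  proof (rule ccontr)
    assume "\<not> ?thesis"
    then have "(\<Sum>l<N. Apow N A k i l * A l j) = 0"
      by (intro sum.neutral) auto
    with Suc.prems(2) show False
      by simp
  qed
  then obtain l where l: "l < N" "Apow N A k i l \<noteq> 0" "A l j \<noteq> 0"
    by auto
  then have "A l j = 1"
    using zero_one Suc.prems(1) by fastforce
  with l Suc.IH[of l] Suc.prems(1) closed show ?case
    by blast
qed

lemma harmonic_eq_Max:
  assumes harm: "\<forall>i<N. (\<Sum>j<N. real (A i j) * u j) = real d * u i" and j: "j < N"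
  shows "u j = Max (u ` {..<N})"
proof -
  define M where "M = Max (u ` {..<N})"
  have le_M: "i < N \<Longrightarrow> u i \<le> M" for i
    by (simp add: M_def)
  obtain i0 where i0: "i0 < N" "u i0 = M"
    using Max_in[of "u ` {..<N}"] N_pos unfolding M_def by fastforce
  define S where "S = {i. i < N \<and> u i = M}"
  have closed: "\<forall>i<N. \<forall>j<N. A i j = 1 \<longrightarrow> i \<in> S \<longrightarrow> j \<in> S"
  proof (intro allI impI)
    fix i j
    assume ij: "i < N" "j < N" "A i j = 1" "i \<in> S"
    have "(\<Sum>l<N. real (A i l)) = real d"
      using row_sums ij by (metis of_nat_sum)
    then have "(\<Sum>l<N. real (A i l) * M) = real d * M"
      by (simp add: sum_distrib_right[symmetric])
    then have sum0: "(\<Sum>l<N. real (A i l) * (M - u l)) = 0"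
      using harm ij by (simp add: S_def right_diff_distrib sum_subtractf)
    have nonneg: "0 \<le> real (A i l) * (M - u l)" if "l \<in> {..<N}" for l
      using le_M[of l] that by (intro mult_nonneg_nonneg) auto
    have "\<forall>l\<in>{..<N}. real (A i l) * (M - u l) = 0"
      using sum_nonneg_eq_0_iff[OF finite_lessThan nonneg] sum0 by (rule iffD1)
    then have "real (A i j) * (M - u j) = 0"
      using ij(2) by simp
    then show "j \<in> S"
      using ij(2,3) by (simp add: S_def)
  qed
  obtain k where k: "\<forall>i<N. \<forall>j<N. Apow N A k i j > 0"
    using prim unfolding primitive_def by blast
  have "i0 \<in> S"
    using i0 by (simp add: S_def)
  moreover have "Apow N A k i0 j > 0"
    using k i0(1) j by blast
  ultimately have "j \<in> S"
    using reachable_closed[OF closed _ j] by blast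
  then show ?thesis
    unfolding S_def M_def by blast
qed

lemma uvec_eq: "uvec N A = (\<lambda>i. if i < N then 1 / real N else 0)"
  unfolding uvec_def
proof (rule the_equality)
  let ?u0 = "\<lambda>i. if i < N then 1 / real N else 0"
  have "(\<Sum>j<N. real (A i j) * ?u0 j) = lamA N A * ?u0 i" if "i < N" for i
  proof -
    have "(\<Sum>j<N. real (A i j) * ?u0 j) = (\<Sum>j<N. real (A i j)) / real N"
      by (simp add: sum_divide_distrib)
    also have "\<dots> = real d / real N"
      using row_sums that by (metis of_nat_sum)
    finally show ?thesis
      using that by (simp add: lamA_eq)
  qed
  moreover have "(\<Sum>i<N. ?u0 i) = 1"
    using N_pos by simp
  ultimately show "(\<forall>i<N. ?u0 i > 0) \<and> (\<forall>i\<ge>N. ?u0 i = 0) \<and> (\<Sum>i<N. ?u0 i) = 1 \<and>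
      (\<forall>i<N. (\<Sum>j<N. real (A i j) * ?u0 j) = lamA N A * ?u0 i)"
    by simp
next
  fix u
  assume u: "(\<forall>i<N. u i > 0) \<and> (\<forall>i\<ge>N. u i = 0) \<and> (\<Sum>i<N. u i) = 1 \<and>
      (\<forall>i<N. (\<Sum>j<N. real (A i j) * u j) = lamA N A * u i)"
  define M where "M = Max (u ` {..<N})"
  have "\<forall>i<N. (\<Sum>j<N. real (A i j) * u j) = real d * u i"
    using u by (simp add: lamA_eq)
  then have const: "i < N \<Longrightarrow> u i = M" for i
    unfolding M_def by (rule harmonic_eq_Max)
  have "1 = (\<Sum>i<N. u i)"
    using u by simp
  also have "\<dots> = (\<Sum>i<N. M)"
    using const by (intro sum.cong) simp_all
  finally have "M = 1 / real N"
    using N_pos by (simp add: field_simps)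
  then show "u = (\<lambda>i. if i < N then 1 / real N else 0)"
    using u const by (simp add: fun_eq_iff not_less)
qed

lemma Pm_eq: "i < N \<Longrightarrow> j < N \<Longrightarrow> Pm N A i j = real (A i j) / real d"
  by (simp add: Pm_def uvec_eq lamA_eq)


definition nth_succ :: "nat \<Rightarrow> nat \<Rightarrow> nat" where
  "nth_succ i k = sorted_list_of_set (Cset N A i) ! (k mod d)"

lemma nth_succ_in_Cset:
  assumes "i < N"
  shows "nth_succ i k \<in> Cset N A i"
proof -
  have "length (sorted_list_of_set (Cset N A i)) = d"
    using assms by (simp add: card_Cset)
  then have "k mod d < length (sorted_list_of_set (Cset N A i))"
    using d_ge_2 by simp
  moreover have "finite (Cset N A i)"
    by (simp add: Cset_def)
  ultimately show ?thesis
    unfolding nth_succ_def by (metis nth_mem set_sorted_list_of_set)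
qed

lemma card_nth_succ_eq:
  assumes i: "i < N" and j: "j \<in> Cset N A i"
  shows "card ({..<d} \<inter> {k. nth_succ i k = j}) = 1"
proof -
  let ?L = "sorted_list_of_set (Cset N A i)"
  have fin: "finite (Cset N A i)"
    by (simp add: Cset_def)
  have len: "length ?L = d"
    using card_Cset[OF i] by simp
  obtain p where p: "p < d" "?L ! p = j"
    using j len fin by (metis in_set_conv_nth set_sorted_list_of_set)
  have "nth_succ i k = j \<longleftrightarrow> k = p" if "k < d" for k
    using that p len nth_eq_iff_index_eq[of ?L k p] by (auto simp: nth_succ_def)
  then have "{..<d} \<inter> {k. nth_succ i k = j} = {p}"
    using p by auto
  then show ?thesis
    by simp
qed

(* muc is realised as the law of a random walk driven by independent coins: the first letter is
   uniform on {..<N} and the n-th step moves to the (c n)-th successor, c n uniform on {..<d}. *)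

definition coin :: "nat \<Rightarrow> nat measure" where
  "coin n = measure_pmf (pmf_of_set (if n = 0 then {..<N} else {..<d}))"

primrec walk :: "(nat \<Rightarrow> nat) \<Rightarrow> nat \<Rightarrow> nat" where
  "walk c 0 = c 0 mod N"
| "walk c (Suc n) = nth_succ (walk c n) (c (Suc n))"

lemma walk_less: "walk c n < N"
  using N_pos nth_succ_in_Cset by (induction n) (auto simp: Cset_def)

lemma walk_in_OmegaA: "walk c \<in> OmegaA N A"
  using walk_less nth_succ_in_Cset by (auto simp: OmegaA_def Cset_def)

lemma prob_space_coin: "prob_space (coin n)"
  unfolding coin_def by (rule measure_pmf.prob_space_axioms)

interpretation coins: product_prob_space coin UNIV
  by (rule product_prob_spaceI[OF prob_space_coin])

lemma sets_coin [simp]: "sets (coin n) = UNIV"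
  by (simp add: coin_def)

lemma measurable_walk_nth: "(\<lambda>c. walk c n) \<in> measurable (PiM UNIV coin) (count_space UNIV)"
proof (induction n)
  case 0
  have "(\<lambda>c. c 0) \<in> measurable (PiM UNIV coin) (coin 0)"
    by (rule measurable_component_singleton) simp
  then have "(\<lambda>c. c 0) \<in> measurable (PiM UNIV coin) (count_space UNIV)"
    by (simp add: coin_def measurable_cong_sets)
  then have "(\<lambda>c. (\<lambda>i. i mod N) (c 0)) \<in> measurable (PiM UNIV coin) (count_space UNIV)"
    by (rule measurable_compose[where g="\<lambda>i. i mod N"]) simp
  then show ?case
    by simp
next
  case (Suc n)
  have "(\<lambda>c. c (Suc n)) \<in> measurable (PiM UNIV coin) (coin (Suc n))"
    by (rule measurable_component_singleton) simp
  then have "(\<lambda>c. c (Suc n)) \<in> measurable (PiM UNIV coin) (count_space UNIV)"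
    by (simp add: coin_def measurable_cong_sets)
  then have "(\<lambda>c. nth_succ i (c (Suc n))) \<in> measurable (PiM UNIV coin) (count_space UNIV)" for i
    by (rule measurable_compose[where g="nth_succ i"]) simp
  then show ?case
    using measurable_compose_countable[where f="\<lambda>i c. nth_succ i (c (Suc n))", OF _ Suc.IH] by simp
qed

lemma measurable_walk: "walk \<in> measurable (PiM UNIV coin) (MOmega N A)"
  unfolding MOmega_def
proof (rule measurable_restrict_space2)
  show "walk \<in> space (PiM UNIV coin) \<rightarrow> OmegaA N A"
    using walk_in_OmegaA by auto
  have "(\<lambda>c n. walk c n) \<in> measurable (PiM UNIV coin) (PiM UNIV (\<lambda>_. count_space UNIV))"
    by (rule measurable_PiM_single') (simp_all add: measurable_walk_nth space_PiM)
  then show "walk \<in> measurable (PiM UNIV coin) (PiM UNIV (\<lambda>_. count_space UNIV))"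
    by simp
qed

definition coins_for :: "nat list \<Rightarrow> nat \<Rightarrow> nat set" where
  "coins_for w k = (if k = 0 then {a. a mod N = w ! 0} else {a. nth_succ (w ! (k - 1)) a = w ! k})"

lemma walk_in_cyl_iff: "walk c \<in> cyl N A w \<longleftrightarrow> (\<forall>k<length w. c k \<in> coins_for w k)"
proof -
  have "(\<forall>k<n. walk c k = w ! k) \<longleftrightarrow> (\<forall>k<n. c k \<in> coins_for w k)" if "n \<le> length w" for n
    using that
  proof (induction n)
    case (Suc n)
    then have "(\<forall>k<n. walk c k = w ! k) \<Longrightarrow> walk c n = w ! n \<longleftrightarrow> c n \<in> coins_for w n"
      by (cases n) (auto simp: coins_for_def)
    with Suc show ?case
      by (auto simp: less_Suc_eq)
  qed simp
  then show ?thesis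
    using walk_in_OmegaA by (simp add: cyl_def)
qed

lemma emeasure_coins_for:
  assumes w: "adm N A w" and k: "k < length w"
  shows "emeasure (coin k) (coins_for w k) = ennreal (if k = 0 then 1 / real N else 1 / real d)"
proof (cases k)
  case 0
  have "{..<N} \<inter> {a. a mod N = w ! 0} = {w ! 0}"
    using adm_nth_less[OF w, of 0] k 0 by auto
  then show ?thesis
    using 0 N_pos
    by (simp add: coin_def coins_for_def measure_pmf.emeasure_eq_measure measure_pmf_of_set lessThan_empty_iff)
next
  case (Suc j)
  have "w ! k \<in> Cset N A (w ! j)"
    using w k Suc by (auto simp: adm_def Cset_def)
  then have "card ({..<d} \<inter> coins_for w k) = 1"
    using card_nth_succ_eq adm_nth_less[OF w, of j] k Suc by (simp add: coins_for_def)
  then show ?thesis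
    using Suc d_ge_2
    by (simp add: coin_def measure_pmf.emeasure_eq_measure measure_pmf_of_set lessThan_empty_iff)
qed

definition walk_measure :: "(nat \<Rightarrow> nat) measure" where
  "walk_measure = distr (PiM UNIV coin) (MOmega N A) walk"

lemma emeasure_walk_measure_cyl:
  assumes w: "adm N A w" "w \<noteq> []"
  shows "emeasure walk_measure (cyl N A w) = ennreal (1 / (real N * real d ^ (length w - 1)))"
proof -
  have "emeasure walk_measure (cyl N A w) = emeasure (PiM UNIV coin) (walk -` cyl N A w \<inter> space (PiM UNIV coin))"
    unfolding walk_measure_def using cyl_in_sets_MOmega measurable_walk by (simp add: emeasure_distr)
  also have "walk -` cyl N A w \<inter> space (PiM UNIV coin) =
      {c \<in> space (PiM UNIV coin). \<forall>k\<in>{..<length w}. c k \<in> coins_for w k}"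
    using walk_in_cyl_iff by auto
  also have "emeasure (PiM UNIV coin) \<dots> = (\<Prod>k<length w. emeasure (coin k) (coins_for w k))"
    by (rule coins.emeasure_PiM_Collect) auto
  also have "\<dots> = (\<Prod>k<length w. ennreal (if k = 0 then 1 / real N else 1 / real d))"
    using emeasure_coins_for[OF w(1)] by simp
  also have "\<dots> = ennreal (\<Prod>k<length w. if k = 0 then 1 / real N else 1 / real d)"
    by (rule prod_ennreal) simp
  also have "(\<Prod>k<length w. if k = 0 then 1 / real N else 1 / real d) = 1 / (real N * real d ^ (length w - 1))"
    using w(2) by (cases "length w") (simp_all add: prod.lessThan_Suc_shift power_one_over del: prod.lessThan_Suc)
  finally show ?thesis .
qed

lemma muc_props:
  "sets (muc N A) = sets (MOmega N A) \<and> emeasure (muc N A) (space (muc N A)) = 1 \<and>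
     (\<forall>\<alpha>. adm N A \<alpha> \<and> \<alpha> \<noteq> [] \<longrightarrow>
        emeasure (muc N A) (cyl N A \<alpha>) = ennreal (uvec N A (last \<alpha>) / lamA N A ^ (length \<alpha> - 1)))"
  unfolding muc_def
proof (rule someI[of _ walk_measure], intro conjI allI impI)
  show "sets walk_measure = sets (MOmega N A)"
    by (simp add: walk_measure_def)
  have "emeasure walk_measure (space walk_measure) =
      emeasure (PiM UNIV coin) (walk -` space (MOmega N A) \<inter> space (PiM UNIV coin))"
    unfolding walk_measure_def using measurable_walk by (simp add: emeasure_distr)
  also have "walk -` space (MOmega N A) \<inter> space (PiM UNIV coin) = space (PiM UNIV coin)"
    using walk_in_OmegaA by (auto simp: MOmega_def space_restrict_space space_PiM)
  finally show "emeasure walk_measure (space walk_measure) = 1"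
    by (simp add: coins.emeasure_space_1)
  fix \<alpha>
  assume "adm N A \<alpha> \<and> \<alpha> \<noteq> []"
  then show "emeasure walk_measure (cyl N A \<alpha>) = ennreal (uvec N A (last \<alpha>) / lamA N A ^ (length \<alpha> - 1))"
    using emeasure_walk_measure_cyl adm_last_less[of N A \<alpha>] by (simp add: uvec_eq lamA_eq)
qed

end

section \<open>The Laplacian on cylinders\<close>

context regular_shift
begin

abbreviation mu :: "(nat \<Rightarrow> nat) measure" where
  "mu \<equiv> muc N A"

lemma sets_mu: "sets mu = sets (MOmega N A)"
  using muc_props by blast

lemma space_mu: "space mu = OmegaA N A"
  using sets_eq_imp_space_eq[OF sets_mu] by (simp add: MOmega_def space_restrict_space space_PiM)

lemma prob_space_mu: "prob_space mu"
  using muc_props by (intro prob_spaceI) blast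

lemma cyl_in_sets_mu: "cyl N A w \<in> sets mu"
  using cyl_in_sets_MOmega sets_mu by simp

lemma measure_cyl:
  assumes "adm N A w" "w \<noteq> []"
  shows "measure mu (cyl N A w) = 1 / (real N * real d ^ (length w - 1))"
  using muc_props assms adm_last_less[OF assms] by (simp add: measure_def uvec_eq lamA_eq)

lemma measure_cyl_pos: "adm N A w \<Longrightarrow> w \<noteq> [] \<Longrightarrow> measure mu (cyl N A w) > 0"
  using measure_cyl N_pos d_ge_2 by simp

lemma cyl_nonempty: "adm N A w \<Longrightarrow> w \<noteq> [] \<Longrightarrow> cyl N A w \<noteq> {}"
  using measure_cyl_pos by fastforce

lemma has_bochner_integral_cyl:
  "has_bochner_integral mu (indicator (cyl N A w)) (measure mu (cyl N A w))"
proof -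
  interpret prob_space mu
    by (rule prob_space_mu)
  show ?thesis
    by (rule has_bochner_integral_real_indicator[OF cyl_in_sets_mu]) (simp add: less_top[symmetric])
qed

definition first_diff :: "(nat \<Rightarrow> nat) \<Rightarrow> (nat \<Rightarrow> nat) \<Rightarrow> nat" where
  "first_diff x y = (LEAST m. x m \<noteq> y m)"

lemma first_diff_eqI: "x p \<noteq> y p \<Longrightarrow> (\<And>i. i < p \<Longrightarrow> x i = y i) \<Longrightarrow> first_diff x y = p"
  unfolding first_diff_def by (rule Least_equality) (auto simp: not_less[symmetric])

lemma first_diff_le_iff:
  assumes "x \<noteq> y"
  shows "m \<le> first_diff x y \<longleftrightarrow> (\<forall>i<m. y i = x i)"
proof -
  have ex: "\<exists>m. x m \<noteq> y m"
    using assms by auto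
  have "x (first_diff x y) \<noteq> y (first_diff x y)"
    unfolding first_diff_def by (rule LeastI_ex[OF ex])
  moreover have "i < first_diff x y \<Longrightarrow> x i = y i" for i
    unfolding first_diff_def using not_less_Least by blast
  ultimately show ?thesis
    by (metis leI less_le_trans)
qed

definition kernel :: "(nat \<Rightarrow> nat) \<Rightarrow> (nat \<Rightarrow> nat) \<Rightarrow> real" where
  "kernel x y = (if x = y then 0 else real d ^ first_diff x y)"

definition laplace_integrand ::
    "nat list \<Rightarrow> ((nat \<Rightarrow> nat) \<Rightarrow> real) \<Rightarrow> (nat \<Rightarrow> nat) \<Rightarrow> (nat \<Rightarrow> nat) \<Rightarrow> real" where
  "laplace_integrand \<beta> H x y = indicator (cyl N A \<beta>) y * (H x - H y) * kernel x y"

lemma laplace_integrand_indicator_prefix: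
  assumes x: "x \<in> OmegaA N A" and y: "y \<in> OmegaA N A" and "K \<le> M"
  shows "laplace_integrand (map x [0..<K]) (indicator (cyl N A (map x [0..<M]))) x y =
    (\<Sum>m\<in>{K..<M}. real d ^ m *
      (indicator (cyl N A (map x [0..<m])) y - indicator (cyl N A (map x [0..<Suc m])) y))"
proof (cases "\<forall>i<M. y i = x i")
  case True
  then show ?thesis
    using x y by (auto simp: laplace_integrand_def in_cyl_prefix_iff in_cyl_prefix simp del: upt_Suc
        intro!: sum.neutral)
next
  case False
  then have xy: "x \<noteq> y"
    by auto
  define p where "p = first_diff x y"
  have agree: "y \<in> cyl N A (map x [0..<m]) \<longleftrightarrow> m \<le> p" for m
    using in_cyl_prefix_iff[OF y] first_diff_le_iff[OF xy] by (simp add: p_def)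
  have "p < M"
    using False agree in_cyl_prefix_iff[OF y] by (metis not_le)
  have "(\<Sum>m\<in>{K..<M}. real d ^ m *
      (indicator (cyl N A (map x [0..<m])) y - indicator (cyl N A (map x [0..<Suc m])) y)) =
      (\<Sum>m\<in>{K..<M}. if m = p then real d ^ m else 0)"
    by (intro sum.cong) (auto simp: agree indicator_def simp del: upt_Suc)
  also have "\<dots> = (if K \<le> p then real d ^ p else 0)"
    using \<open>p < M\<close> by (simp add: sum.delta)
  finally show ?thesis
    using \<open>p < M\<close> xy x by (simp add: laplace_integrand_def kernel_def p_def agree in_cyl_prefix del: upt_Suc)
qed

lemma has_bochner_integral_laplace_inside:
  assumes x: "x \<in> OmegaA N A" and "1 \<le> K" "K \<le> M"
  shows "has_bochner_integral mu (laplace_integrand (map x [0..<K]) (indicator (cyl N A (map x [0..<M]))) x)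
    (real (M - K) * (real d - 1) / real N)"
proof -
  let ?c = "\<lambda>m. measure mu (cyl N A (map x [0..<m]))"
  have "has_bochner_integral mu
      (\<lambda>y. \<Sum>m\<in>{K..<M}. real d ^ m * (indicator (cyl N A (map x [0..<m])) y
        - indicator (cyl N A (map x [0..<Suc m])) y))
      (\<Sum>m\<in>{K..<M}. real d ^ m * (?c m - ?c (Suc m)))"
    by (intro has_bochner_integral_sum has_bochner_integral_mult_right has_bochner_integral_diff
        has_bochner_integral_cyl)
  moreover have "real d ^ m * (?c m - ?c (Suc m)) = (real d - 1) / real N" if m: "m \<in> {K..<M}" for m
  proof -
    obtain m' where m': "m = Suc m'"
      using m \<open>1 \<le> K\<close> by (cases m) auto
    have "?c m = 1 / (real N * real d ^ m')" "?c (Suc m) = 1 / (real N * real d ^ m)"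
      using measure_cyl[OF adm_prefix[OF x]] m' by (simp_all del: upt_Suc)
    then show ?thesis
      using m' N_pos d_ge_2 by (simp add: field_simps)
  qed
  ultimately have "has_bochner_integral mu
      (\<lambda>y. \<Sum>m\<in>{K..<M}. real d ^ m * (indicator (cyl N A (map x [0..<m])) y
        - indicator (cyl N A (map x [0..<Suc m])) y))
      (real (M - K) * (real d - 1) / real N)"
    by simp
  then show ?thesis
    using laplace_integrand_indicator_prefix[OF x _ \<open>K \<le> M\<close>] space_mu
    by (subst has_bochner_integral_cong[OF refl _ refl]) auto
qed

lemma has_bochner_integral_laplace_outside:
  assumes x: "x \<in> cyl N A \<beta>" and xw: "x \<notin> cyl N A w" and sub: "cyl N A w \<subseteq> cyl N A \<beta>"
    and p: "x p \<noteq> w ! p" "p < length w" "\<And>i. i < p \<Longrightarrow> x i = w ! i"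
  shows "has_bochner_integral mu (laplace_integrand \<beta> (indicator (cyl N A w)) x)
    (- (real d ^ p * measure mu (cyl N A w)))"
proof -
  have "laplace_integrand \<beta> (indicator (cyl N A w)) x = (\<lambda>y. - (real d ^ p * indicator (cyl N A w) y))"
  proof
    fix y
    show "laplace_integrand \<beta> (indicator (cyl N A w)) x y = - (real d ^ p * indicator (cyl N A w) y)"
    proof (cases "y \<in> cyl N A w")
      case True
      then have "first_diff x y = p"
        using p by (intro first_diff_eqI) (auto simp: cyl_def)
      with True xw sub show ?thesis
        by (auto simp: laplace_integrand_def kernel_def)
    qed (use xw in \<open>simp add: laplace_integrand_def\<close>)
  qed
  then show ?thesis
    by (simp add: has_bochner_integral_minus has_bochner_integral_mult_right has_bochner_integral_cyl)
qed

end

section \<open>The eigenbasis\<close>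

definition haar_coeff :: "nat \<Rightarrow> real \<Rightarrow> nat \<Rightarrow> nat \<Rightarrow> real" where
  "haar_coeff d c j k =
    (if k \<le> j then 1 else if k = Suc j then - real j else 0) * sqrt (real d / (c * real j * real (Suc j)))"

lemma sum_haar_coeff:
  assumes "1 \<le> j" "Suc j \<le> d"
  shows "(\<Sum>k\<in>{1..d}. haar_coeff d c j k) = 0"
proof -
  have "{1..d} = {1..j} \<union> {Suc j} \<union> {Suc (Suc j)..d}"
    using assms by auto
  then have "(\<Sum>k\<in>{1..d}. haar_coeff d c j k) = (\<Sum>k\<in>{1..j}. haar_coeff d c j k) +
      haar_coeff d c j (Suc j) + (\<Sum>k\<in>{Suc (Suc j)..d}. haar_coeff d c j k)"
    by (simp add: sum.union_disjoint)
  then show ?thesis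
    by (simp add: haar_coeff_def)
qed

lemma sum_haar_coeff_squares:
  assumes "1 \<le> j" "Suc j \<le> d" "c > 0"
  shows "(\<Sum>k\<in>{1..d}. (haar_coeff d c j k)\<^sup>2 * (c / real d)) = 1"
proof -
  define s where "s = sqrt (real d / (c * real j * real (Suc j)))"
  have "{1..d} = {1..j} \<union> {Suc j} \<union> {Suc (Suc j)..d}"
    using assms by auto
  then have "(\<Sum>k\<in>{1..d}. (haar_coeff d c j k)\<^sup>2) = (\<Sum>k\<in>{1..j}. (haar_coeff d c j k)\<^sup>2) +
      (haar_coeff d c j (Suc j))\<^sup>2 + (\<Sum>k\<in>{Suc (Suc j)..d}. (haar_coeff d c j k)\<^sup>2)"
    by (simp add: sum.union_disjoint)
  also have "\<dots> = (real j + (real j)\<^sup>2) * s\<^sup>2"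
  proof -
    have "(\<Sum>k\<in>{1..j}. (haar_coeff d c j k)\<^sup>2) = (\<Sum>k\<in>{1..j}. s\<^sup>2)"
      by (intro sum.cong) (simp_all add: haar_coeff_def s_def)
    moreover have "haar_coeff d c j (Suc j) = - real j * s"
      by (simp add: haar_coeff_def s_def)
    moreover have "(\<Sum>k\<in>{Suc (Suc j)..d}. (haar_coeff d c j k)\<^sup>2) = 0"
      by (simp add: haar_coeff_def)
    ultimately show ?thesis
      by (simp add: power_mult_distrib algebra_simps)
  qed
  also have "\<dots> = real d / c"
  proof -
    have "s\<^sup>2 = real d / (c * (real j + (real j)\<^sup>2))"
      using assms by (simp add: s_def power2_eq_square algebra_simps)
    moreover have "real j + (real j)\<^sup>2 \<noteq> 0"
      using assms by (simp add: add_nonneg_eq_0_iff)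
    ultimately show ?thesis
      using assms by simp
  qed
  finally have "(\<Sum>k\<in>{1..d}. (haar_coeff d c j k)\<^sup>2) * (c / real d) = 1"
    using assms by simp
  then show ?thesis
    by (simp only: sum_distrib_right)
qed

locale regular_triple = regular_shift +
  fixes lam :: real and iota :: "nat list \<Rightarrow> nat \<Rightarrow> nat"
  assumes lam_gt_1: "lam > 1" and valid_iota: "valid_iota N A iota"
begin

lemma inverse_dist_power_eq_kernel: "1 / (dmet lam x y powr log lam (lamA N A)) = kernel x y"
proof (cases "x = y")
  case False
  have "dmet lam x y powr log lam (lamA N A) = (lam powr log lam (real d)) powr (- real (first_diff x y))"
    using False by (simp add: dmet_def first_diff_def lamA_eq powr_powr mult.commute)
  also have "\<dots> = real d powr (- real (first_diff x y))"
    using lam_gt_1 d_ge_2 by simp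
  finally show ?thesis
    using False d_ge_2 by (simp add: kernel_def powr_minus powr_realpow divide_inverse)
qed (simp add: dmet_def kernel_def)

abbreviation mass :: "nat list \<Rightarrow> real" where
  "mass \<nu> \<equiv> measure mu (cyl N A \<nu>)"

definition child :: "nat list \<Rightarrow> nat \<Rightarrow> (nat \<Rightarrow> nat) set" where
  "child \<nu> k = cyl N A (\<nu> @ [iota \<nu> k])"

definition haar :: "nat list \<Rightarrow> nat \<Rightarrow> (nat \<Rightarrow> nat) \<Rightarrow> real" where
  "haar \<nu> j y = (\<Sum>k\<in>{1..d}. haar_coeff d (mass \<nu>) j k * indicator (child \<nu> k) y)"

lemma iota_bij: "adm N A \<nu> \<Longrightarrow> \<nu> \<noteq> [] \<Longrightarrow> bij_betw (iota \<nu>) {1..d} (Cset N A (last \<nu>))"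
  using valid_iota adm_last_less cc_eq unfolding valid_iota_def by metis

lemma adm_snoc_iota: "adm N A \<nu> \<Longrightarrow> \<nu> \<noteq> [] \<Longrightarrow> k \<in> {1..d} \<Longrightarrow> adm N A (\<nu> @ [iota \<nu> k])"
  using iota_bij[of \<nu>] bij_betwE by (fastforce simp: adm_snoc Cset_def)

lemma child_subset: "child \<nu> k \<subseteq> cyl N A \<nu>"
  unfolding child_def by (rule cyl_append_subset)

lemma in_child_iff:
  assumes "adm N A \<nu>" "\<nu> \<noteq> []" "k0 \<in> {1..d}" "y \<in> child \<nu> k0" "k \<in> {1..d}"
  shows "y \<in> child \<nu> k \<longleftrightarrow> k = k0"
proof
  assume "y \<in> child \<nu> k"
  then have "iota \<nu> k = iota \<nu> k0"
    using assms(4) by (simp add: child_def cyl_snoc)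
  then show "k = k0"
    using bij_betw_imp_inj_on[OF iota_bij[OF assms(1,2)]] assms(3,5) by (auto dest: inj_onD)
qed (use assms(4) in simp)

lemma measure_child:
  assumes "adm N A \<nu>" "\<nu> \<noteq> []" "k \<in> {1..d}"
  shows "measure mu (child \<nu> k) = mass \<nu> / real d"
  using measure_cyl[OF adm_snoc_iota[OF assms]] measure_cyl[OF assms(1,2)] assms(2)
  by (cases "length \<nu>") (simp_all add: child_def)

lemma haar_at:
  assumes "adm N A \<nu>" "\<nu> \<noteq> []" "k0 \<in> {1..d}" "y \<in> child \<nu> k0"
  shows "haar \<nu> j y = haar_coeff d (mass \<nu>) j k0"
proof -
  have "haar \<nu> j y = (\<Sum>k\<in>{1..d}. if k = k0 then haar_coeff d (mass \<nu>) j k else 0)"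
    unfolding haar_def by (intro sum.cong) (use in_child_iff[OF assms] in auto)
  then show ?thesis
    using assms(3) by simp
qed

lemma haar_outside: "y \<notin> cyl N A \<nu> \<Longrightarrow> haar \<nu> j y = 0"
  using child_subset by (auto simp: haar_def intro!: sum.neutral)

lemma hfun_eq_haar:
  assumes \<nu>: "adm N A \<nu>" "\<nu> \<noteq> []" and j: "1 \<le> j" "j \<le> d - 1"
  shows "hfun N A iota \<nu> j y = haar \<nu> j y"
proof -
  let ?l = "last \<nu>"
  have l: "?l < N"
    using \<nu> adm_last_less by auto
  have P: "Pm N A ?l (iota \<nu> k) = 1 / real d" if "k \<in> {1..d}" for k
    using that bij_betwE[OF iota_bij[OF \<nu>]] l by (simp add: Pm_eq Cset_def)
  have q: "(\<Sum>k=1..m. Pm N A ?l (iota \<nu> k)) = real m / real d" if "m \<le> d" for m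
    using that P by simp
  have "Suc j \<le> d"
    using j d_ge_2 by simp
  then have q_eqs: "(\<Sum>k=1..j. Pm N A ?l (iota \<nu> k)) = real j / real d"
      "(\<Sum>k=1..Suc j. Pm N A ?l (iota \<nu> k)) = real (Suc j) / real d"
      "Pm N A ?l (iota \<nu> (Suc j)) = 1 / real d"
    using q P by simp_all
  have c: "mass \<nu> > 0"
    using measure_cyl_pos[OF \<nu>] .
  \<comment> \<open>with all transition probabilities equal to 1/d the paper's coefficients simplify\<close>
  have "sqrt ((1 / real d) / (mass \<nu> * (real j / real d) * (real (Suc j) / real d))) =
      sqrt (real d / (mass \<nu> * real j * real (Suc j)))"
    using d_ge_2 by (simp add: field_simps)
  moreover have "sqrt ((real j / real d) / (mass \<nu> * (real (Suc j) / real d) * (1 / real d))) =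
      real j * sqrt (real d / (mass \<nu> * real j * real (Suc j)))"
  proof -
    have "(real j / real d) / (mass \<nu> * (real (Suc j) / real d) * (1 / real d)) =
        (real j)\<^sup>2 * (real d / (mass \<nu> * real j * real (Suc j)))"
      using d_ge_2 j c by (simp add: field_simps power2_eq_square del: of_nat_Suc)
    then have "sqrt ((real j / real d) / (mass \<nu> * (real (Suc j) / real d) * (1 / real d))) =
        sqrt ((real j)\<^sup>2 * (real d / (mass \<nu> * real j * real (Suc j))))"
      by (rule arg_cong)
    also have "\<dots> = real j * sqrt (real d / (mass \<nu> * real j * real (Suc j)))"
      by (simp only: real_sqrt_mult real_sqrt_abs abs_of_nat)
    finally show ?thesis .
  qed
  ultimately show ?thesis
    using l cc_eq[OF l] unfolding hfun_def haar_def Let_def q_eqs child_def haar_coeff_def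
    by (intro sum.cong) auto
qed


definition haar_eigval :: "nat list \<Rightarrow> nat list \<Rightarrow> real" where
  "haar_eigval \<nu> \<beta> = (real (length \<nu> + 1 - length \<beta>) * (real d - 1) + 1) / real N"

lemma laplace_integrand_haar:
  "laplace_integrand \<beta> (haar \<nu> j) x =
    (\<lambda>y. \<Sum>k\<in>{1..d}. haar_coeff d (mass \<nu>) j k * laplace_integrand \<beta> (indicator (child \<nu> k)) x y)"
proof
  fix y
  have "haar \<nu> j x - haar \<nu> j y =
      (\<Sum>k\<in>{1..d}. haar_coeff d (mass \<nu>) j k * (indicator (child \<nu> k) x - indicator (child \<nu> k) y))"
    unfolding haar_def by (simp only: sum_subtractf[symmetric] right_diff_distrib)
  then have "laplace_integrand \<beta> (haar \<nu> j) x y = (\<Sum>k\<in>{1..d}. indicator (cyl N A \<beta>) y *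
      (haar_coeff d (mass \<nu>) j k * (indicator (child \<nu> k) x - indicator (child \<nu> k) y)) * kernel x y)"
    unfolding laplace_integrand_def by (simp only: sum_distrib_left sum_distrib_right)
  also have "\<dots> =
      (\<Sum>k\<in>{1..d}. haar_coeff d (mass \<nu>) j k * laplace_integrand \<beta> (indicator (child \<nu> k)) x y)"
    by (intro sum.cong) (simp_all add: laplace_integrand_def mult_ac)
  finally show "laplace_integrand \<beta> (haar \<nu> j) x y =
      (\<Sum>k\<in>{1..d}. haar_coeff d (mass \<nu>) j k * laplace_integrand \<beta> (indicator (child \<nu> k)) x y)" .
qed

lemma in_some_child:
  assumes \<nu>: "adm N A \<nu>" "\<nu> \<noteq> []" and x: "x \<in> cyl N A \<nu>"
  obtains k0 where "k0 \<in> {1..d}" "x \<in> child \<nu> k0"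
proof -
  have xo: "x \<in> OmegaA N A"
    using x by (simp add: cyl_def)
  have "x (length \<nu> - 1) = last \<nu>"
    using x \<nu>(2) by (simp add: cyl_def last_conv_nth)
  moreover have "A (x (length \<nu> - 1)) (x (Suc (length \<nu> - 1))) = 1"
    using xo by (simp add: OmegaA_def)
  ultimately have "A (last \<nu>) (x (length \<nu>)) = 1"
    using \<nu>(2) by simp
  then have "x (length \<nu>) \<in> Cset N A (last \<nu>)"
    using xo by (simp add: Cset_def OmegaA_def)
  then obtain k0 where "k0 \<in> {1..d}" "iota \<nu> k0 = x (length \<nu>)"
    using iota_bij[OF \<nu>] by (metis bij_betw_iff_bijections)
  with x show ?thesis
    using that by (simp add: child_def cyl_snoc)
qed

lemma has_bochner_integral_laplace_child:
  assumes \<nu>: "adm N A \<nu>" "\<nu> = \<beta> @ w" "\<beta> \<noteq> []"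
    and k0: "k0 \<in> {1..d}" "x \<in> child \<nu> k0" and k: "k \<in> {1..d}"
  shows "has_bochner_integral mu (laplace_integrand \<beta> (indicator (child \<nu> k)) x)
    (if k = k0 then real (length \<nu> + 1 - length \<beta>) * (real d - 1) / real N else - (1 / real N))"
proof (cases "k = k0")
  case True
  have x: "x \<in> cyl N A (\<nu> @ [iota \<nu> k0])"
    using k0(2) by (simp add: child_def)
  then have xo: "x \<in> OmegaA N A"
    by (simp add: cyl_def)
  have "map x [0..<length \<beta>] = \<beta>"
    using x \<nu>(2) cyl_append_subset[of N A \<beta> "w @ [iota \<nu> k0]"] by (auto simp: in_cyl_iff simp del: upt_Suc)
  moreover have "cyl N A (map x [0..<Suc (length \<nu>)]) = child \<nu> k"
    using x True by (auto simp: child_def in_cyl_iff simp del: upt_Suc)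
  moreover have "1 \<le> length \<beta>" "length \<beta> \<le> Suc (length \<nu>)"
    using \<nu> by (auto simp: Suc_le_eq)
  ultimately show ?thesis
    using has_bochner_integral_laplace_inside[OF xo, of "length \<beta>" "Suc (length \<nu>)"] True by simp
next
  case False
  have ne: "\<nu> \<noteq> []"
    using \<nu> by simp
  have x: "x \<in> cyl N A \<nu>" "x (length \<nu>) = iota \<nu> k0"
    using k0(2) by (simp_all add: child_def cyl_snoc)
  have sub: "cyl N A \<nu> \<subseteq> cyl N A \<beta>"
    using \<nu>(2) cyl_append_subset by simp
  have "x \<notin> child \<nu> k"
    using in_child_iff[OF \<nu>(1) ne k0 k] False by simp
  moreover have "iota \<nu> k \<noteq> x (length \<nu>)"
    using False k k0(1) x(2) inj_onD[OF bij_betw_imp_inj_on[OF iota_bij[OF \<nu>(1) ne]]] by metis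
  ultimately have "has_bochner_integral mu (laplace_integrand \<beta> (indicator (child \<nu> k)) x)
      (- (real d ^ length \<nu> * measure mu (child \<nu> k)))"
    unfolding child_def
  proof (intro has_bochner_integral_laplace_outside[where p="length \<nu>"])
    show "x \<in> cyl N A \<beta>"
      using x sub by blast
    show "cyl N A (\<nu> @ [iota \<nu> k]) \<subseteq> cyl N A \<beta>"
      using sub cyl_append_subset by blast
    show "i < length \<nu> \<Longrightarrow> x i = (\<nu> @ [iota \<nu> k]) ! i" for i
      using x by (simp add: cyl_def nth_append)
  qed (simp_all add: child_def)
  moreover have "real d ^ length \<nu> * measure mu (child \<nu> k) = 1 / real N"
    using measure_child[OF \<nu>(1) ne k] measure_cyl[OF \<nu>(1) ne] ne d_ge_2
    by (cases "length \<nu>") (simp_all add: field_simps)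
  ultimately show ?thesis
    using False by simp
qed

lemma has_bochner_integral_laplace_haar_inside:
  assumes \<nu>: "adm N A \<nu>" "\<nu> = \<beta> @ w" "\<beta> \<noteq> []" and j: "1 \<le> j" "Suc j \<le> d"
    and x: "x \<in> cyl N A \<nu>"
  shows "has_bochner_integral mu (laplace_integrand \<beta> (haar \<nu> j) x) (haar_eigval \<nu> \<beta> * haar \<nu> j x)"
proof -
  have ne: "\<nu> \<noteq> []"
    using \<nu> by simp
  obtain k0 where k0: "k0 \<in> {1..d}" "x \<in> child \<nu> k0"
    using in_some_child[OF \<nu>(1) ne x] .
  define E where "E = real (length \<nu> + 1 - length \<beta>) * (real d - 1) / real N"
  have "has_bochner_integral mu (laplace_integrand \<beta> (haar \<nu> j) x)
      (\<Sum>k\<in>{1..d}. haar_coeff d (mass \<nu>) j k * (if k = k0 then E else - (1 / real N)))"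
    unfolding laplace_integrand_haar E_def
    by (intro has_bochner_integral_sum has_bochner_integral_mult_right has_bochner_integral_laplace_child[OF \<nu> k0])
  moreover have "(\<Sum>k\<in>{1..d}. haar_coeff d (mass \<nu>) j k * (if k = k0 then E else - (1 / real N))) =
      haar_coeff d (mass \<nu>) j k0 * (E + 1 / real N)"
    using sum_mult_if_eq[of "{1..d}" k0] k0 sum_haar_coeff[OF j] by simp
  moreover have "E + 1 / real N = haar_eigval \<nu> \<beta>"
    by (simp add: E_def haar_eigval_def add_divide_distrib)
  ultimately show ?thesis
    using haar_at[OF \<nu>(1) ne k0] by (simp add: mult.commute)
qed

lemma has_bochner_integral_laplace_haar_outside:
  assumes \<nu>: "adm N A \<nu>" "\<nu> = \<beta> @ w" "\<beta> \<noteq> []" and j: "1 \<le> j" "Suc j \<le> d"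
    and x: "x \<in> cyl N A \<beta>" "x \<notin> cyl N A \<nu>"
  shows "has_bochner_integral mu (laplace_integrand \<beta> (haar \<nu> j) x) 0"
proof -
  have ne: "\<nu> \<noteq> []"
    using \<nu> by simp
  have "\<exists>i<length \<nu>. x i \<noteq> \<nu> ! i"
    using x by (auto simp: cyl_def)
  define p where "p = (LEAST i. i < length \<nu> \<and> x i \<noteq> \<nu> ! i)"
  have p: "p < length \<nu>" "x p \<noteq> \<nu> ! p"
    using LeastI_ex[OF \<open>\<exists>i<length \<nu>. x i \<noteq> \<nu> ! i\<close>] unfolding p_def by auto
  have before_p: "i < p \<Longrightarrow> x i = \<nu> ! i" for i
    using not_less_Least[of i "\<lambda>i. i < length \<nu> \<and> x i \<noteq> \<nu> ! i"] p unfolding p_def by auto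
  \<comment> \<open>every child cylinder is entered at the same depth p, so all contributions are equal\<close>
  define c where "c = - (real d ^ p * (mass \<nu> / real d))"
  have "has_bochner_integral mu (laplace_integrand \<beta> (indicator (child \<nu> k)) x) c" if k: "k \<in> {1..d}" for k
  proof -
    have "has_bochner_integral mu (laplace_integrand \<beta> (indicator (child \<nu> k)) x)
        (- (real d ^ p * measure mu (child \<nu> k)))"
      unfolding child_def
      using x \<nu>(2) cyl_append_subset[of N A \<beta> w] cyl_append_subset[of N A \<nu> "[iota \<nu> k]"] p before_p
      by (intro has_bochner_integral_laplace_outside[where p=p]) (auto simp: nth_append)
    then show ?thesis
      by (simp add: measure_child[OF \<nu>(1) ne k] c_def)
  qed
  then have "has_bochner_integral mu (laplace_integrand \<beta> (haar \<nu> j) x)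
      (\<Sum>k\<in>{1..d}. haar_coeff d (mass \<nu>) j k * c)"
    unfolding laplace_integrand_haar by (intro has_bochner_integral_sum has_bochner_integral_mult_right)
  moreover have "(\<Sum>k\<in>{1..d}. haar_coeff d (mass \<nu>) j k * c) = 0"
    using sum_haar_coeff[OF j] by (simp add: sum_distrib_right[symmetric])
  ultimately show ?thesis
    by simp
qed

lemma has_bochner_integral_laplace_haar:
  assumes \<nu>: "adm N A \<nu>" "\<nu> = \<beta> @ w" "\<beta> \<noteq> []" and j: "1 \<le> j" "Suc j \<le> d"
    and x: "x \<in> cyl N A \<beta>"
  shows "has_bochner_integral mu (laplace_integrand \<beta> (haar \<nu> j) x) (haar_eigval \<nu> \<beta> * haar \<nu> j x)"
proof (cases "x \<in> cyl N A \<nu>")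
  case True
  then show ?thesis
    by (rule has_bochner_integral_laplace_haar_inside[OF \<nu> j])
next
  case False
  then show ?thesis
    using has_bochner_integral_laplace_haar_outside[OF \<nu> j x False] haar_outside by simp
qed


definition basis_piece :: "bidx \<Rightarrow> nat list \<times> nat list" where
  "basis_piece b = (case b of Eg \<gamma> \<Rightarrow> \<gamma> | Eh \<gamma> \<nu> j \<Rightarrow> \<gamma>)"

definition basis_eigval :: "bidx \<Rightarrow> real" where
  "basis_eigval b = (case b of Eg \<gamma> \<Rightarrow> Lval N A \<gamma> | Eh \<gamma> \<nu> j \<Rightarrow> Lval N A \<gamma> + haar_eigval \<nu> (snd \<gamma>))"

lemma Eg_in_bidx_set_iff: "Eg \<gamma> \<in> bidx_set N A \<longleftrightarrow> \<gamma> \<in> IA N A"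
  by (auto simp: bidx_set_def)

lemma Eh_in_bidx_set_iff:
  "Eh \<gamma> \<nu> j \<in> bidx_set N A \<longleftrightarrow>
    \<gamma> \<in> IA N A \<and> adm N A \<nu> \<and> (\<exists>w. \<nu> = snd \<gamma> @ w) \<and> 1 \<le> j \<and> Suc j \<le> d"
proof -
  have "cc N A (last \<nu>) = d" if "\<gamma> \<in> IA N A" "adm N A \<nu>" "\<exists>w. \<nu> = snd \<gamma> @ w"
  proof -
    have "\<nu> \<noteq> []"
      using that by (auto simp: IA_def)
    then show ?thesis
      using cc_eq adm_last_less that(2) by blast
  qed
  moreover have "Eh \<gamma> \<nu> j \<in> bidx_set N A \<longleftrightarrow> \<gamma> \<in> IA N A \<and> adm N A \<nu> \<and> (\<exists>w. \<nu> = snd \<gamma> @ w) \<and>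
      cc N A (last \<nu>) \<ge> 2 \<and> 1 \<le> j \<and> j \<le> cc N A (last \<nu>) - 1"
    by (cases \<gamma>) (simp add: bidx_set_def image_iff)
  ultimately show ?thesis
    using d_ge_2 by auto
qed

lemma basis_piece_in_IA: "b \<in> bidx_set N A \<Longrightarrow> basis_piece b \<in> IA N A"
  by (cases b) (auto simp: basis_piece_def Eg_in_bidx_set_iff Eh_in_bidx_set_iff)

lemma ebasis_Eg:
  "ebasis N A iota (Eg \<gamma>) g = (if g \<in> Gg N A \<gamma> then complex_of_real (1 / sqrt (mass (snd \<gamma>))) else 0)"
  by (simp add: ebasis_def)

lemma ebasis_Eh:
  assumes "Eh \<gamma> \<nu> j \<in> bidx_set N A"
  shows "ebasis N A iota (Eh \<gamma> \<nu> j) g = (if g \<in> Gg N A \<gamma> then complex_of_real (haar \<nu> j (src g)) else 0)"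
proof -
  have "\<nu> \<noteq> []" "adm N A \<nu>" "1 \<le> j" "j \<le> d - 1"
    using assms by (auto simp: Eh_in_bidx_set_iff IA_def)
  then show ?thesis
    using hfun_eq_haar by (simp add: ebasis_def)
qed

lemma ebasis_outside_piece: "g \<notin> Gg N A (basis_piece b) \<Longrightarrow> ebasis N A iota b g = 0"
  by (cases b) (auto simp: basis_piece_def ebasis_def)

lemma Delta_piece_eq_laplace:
  assumes "\<gamma> \<in> IA N A" "g \<in> Gg N A \<gamma>" and f: "\<And>z. z \<in> Gg N A \<gamma> \<Longrightarrow> f z = complex_of_real (H (src z))"
  shows "Delta_piece N A lam \<gamma> f g = complex_of_real (\<integral>y. laplace_integrand (snd \<gamma>) H (src g) y \<partial>mu)"
proof -
  have "Delta_piece N A lam \<gamma> f g = (\<integral>y. complex_of_real (laplace_integrand (snd \<gamma>) H (src g) y) \<partial>mu)"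
    unfolding Delta_piece_def
  proof (rule Bochner_Integration.integral_cong[OF refl])
    fix y
    have "inverse (complex_of_real (dmet lam (src g) y powr log lam (lamA N A))) =
        complex_of_real (kernel (src g) y)"
      using arg_cong[OF inverse_dist_power_eq_kernel[of "src g" y], of complex_of_real]
      by (simp add: of_real_inverse[symmetric] divide_inverse del: of_real_inverse)
    then show "indicator (cyl N A (snd \<gamma>)) y *
        ((f g - f (sinv \<gamma> y)) / complex_of_real (dmet lam (src g) y powr log lam (lamA N A))) =
        complex_of_real (laplace_integrand (snd \<gamma>) H (src g) y)"
      using f[OF assms(2)] f[OF sinv_in_Gg[OF assms(1)]]
      by (cases "y \<in> cyl N A (snd \<gamma>)") (simp_all add: laplace_integrand_def divide_inverse)
  qed
  then show ?thesis
    by (simp only: integral_complex_of_real)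
qed

lemma Delta_piece_ebasis_Eh:
  assumes mem: "Eh \<gamma> \<nu> j \<in> bidx_set N A" and g: "g \<in> Gg N A \<gamma>"
  shows "Delta_piece N A lam \<gamma> (ebasis N A iota (Eh \<gamma> \<nu> j)) g =
    complex_of_real (haar_eigval \<nu> (snd \<gamma>)) * ebasis N A iota (Eh \<gamma> \<nu> j) g"
proof -
  obtain w where w: "\<nu> = snd \<gamma> @ w" and props: "\<gamma> \<in> IA N A" "adm N A \<nu>" "1 \<le> j" "Suc j \<le> d"
    using mem by (auto simp: Eh_in_bidx_set_iff)
  have "snd \<gamma> \<noteq> []"
    using props(1) by (auto simp: IA_def)
  then have "(\<integral>y. laplace_integrand (snd \<gamma>) (haar \<nu> j) (src g) y \<partial>mu) =
      haar_eigval \<nu> (snd \<gamma>) * haar \<nu> j (src g)"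
    using has_bochner_integral_laplace_haar[OF props(2) w _ props(3,4) Gg_D(1)[OF g]]
    by (simp add: has_bochner_integral_integral_eq)
  then show ?thesis
    using Delta_piece_eq_laplace[OF props(1) g, of _ "haar \<nu> j"] ebasis_Eh[OF mem] g by simp
qed

lemma absD_ebasis:
  assumes b: "b \<in> bidx_set N A" and g: "g \<in> GA N A"
  shows "absD N A lam (ebasis N A iota b) g = complex_of_real (basis_eigval b) * ebasis N A iota b g"
proof -
  define \<gamma> where "\<gamma> = piece_of N A g"
  have pg: "\<gamma> \<in> IA N A" "g \<in> Gg N A \<gamma>"
    using piece_of_in_IA[OF g] by (simp_all add: \<gamma>_def)
  have absD: "absD N A lam (ebasis N A iota b) g =
      Delta_piece N A lam \<gamma> (ebasis N A iota b) g + complex_of_real (Lval N A \<gamma>) * ebasis N A iota b g"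
    using g by (simp add: absD_def \<gamma>_def Let_def)
  show ?thesis
  proof (cases "\<gamma> = basis_piece b")
    case False
    then have zero: "z \<in> Gg N A \<gamma> \<Longrightarrow> ebasis N A iota b z = 0" for z
      using Gg_disjoint[of z N A \<gamma> "basis_piece b"] pg basis_piece_in_IA[OF b] ebasis_outside_piece by blast
    have "Delta_piece N A lam \<gamma> (ebasis N A iota b) g = 0"
      using Delta_piece_eq_laplace[OF pg, of _ "\<lambda>_. 0"] zero by (simp add: laplace_integrand_def)
    then show ?thesis
      using absD zero[OF pg(2)] by simp
  next
    case True
    show ?thesis
    proof (cases b)
      case (Eg \<gamma>')
      then have "Delta_piece N A lam \<gamma> (ebasis N A iota b) g = 0"
        using True Delta_piece_eq_laplace[OF pg, of _ "\<lambda>_. 1 / sqrt (mass (snd \<gamma>))"]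
        by (simp add: basis_piece_def ebasis_Eg laplace_integrand_def)
      then show ?thesis
        using absD True Eg by (simp add: basis_eigval_def basis_piece_def)
    next
      case (Eh \<gamma>' \<nu> j)
      then have "Eh \<gamma> \<nu> j \<in> bidx_set N A" "b = Eh \<gamma> \<nu> j"
        using b True by (simp_all add: basis_piece_def)
      then show ?thesis
        using absD Delta_piece_ebasis_Eh pg(2) by (simp add: basis_eigval_def algebra_simps)
    qed
  qed
qed

lemma ebasis_nonzero:
  assumes b: "b \<in> bidx_set N A"
  shows "\<exists>g\<in>GA N A. ebasis N A iota b g \<noteq> 0"
proof -
  obtain \<alpha> \<beta> where ab: "basis_piece b = (\<alpha>, \<beta>)"
    by (cases "basis_piece b")
  have IA: "(\<alpha>, \<beta>) \<in> IA N A"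
    using basis_piece_in_IA[OF b] ab by simp
  \<comment> \<open>for an Eh vector take a point of the first child, where the Haar coefficient is positive\<close>
  obtain y where y: "y \<in> cyl N A \<beta>" "b = Eg (\<alpha>, \<beta>) \<or> (\<exists>\<nu> j. b = Eh (\<alpha>, \<beta>) \<nu> j \<and> y \<in> child \<nu> 1)"
  proof (cases b)
    case (Eg \<gamma>)
    then show ?thesis
      using that cyl_nonempty[OF IA_D(2,3)[OF IA]] ab by (auto simp: basis_piece_def)
  next
    case (Eh \<gamma> \<nu> j)
    then have "adm N A \<nu>" "\<exists>w. \<nu> = \<beta> @ w" "\<gamma> = (\<alpha>, \<beta>)"
      using b ab by (auto simp: Eh_in_bidx_set_iff basis_piece_def)
    moreover from this have "\<nu> \<noteq> []"
      using IA_D(3)[OF IA] by auto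
    ultimately show ?thesis
      using that Eh cyl_nonempty[OF adm_snoc_iota[of \<nu> 1]] child_subset[of \<nu> 1] d_ge_2 cyl_append_subset
      unfolding child_def by fastforce
  qed
  have in_Gg: "sinv (\<alpha>, \<beta>) y \<in> Gg N A (\<alpha>, \<beta>)"
    using sinv_in_Gg[OF IA] y(1) by simp
  have "ebasis N A iota b (sinv (\<alpha>, \<beta>) y) \<noteq> 0"
    using y(2)
  proof
    assume "b = Eg (\<alpha>, \<beta>)"
    then show ?thesis
      using in_Gg measure_cyl_pos[OF IA_D(2,3)[OF IA]] by (simp add: ebasis_Eg)
  next
    assume "\<exists>\<nu> j. b = Eh (\<alpha>, \<beta>) \<nu> j \<and> y \<in> child \<nu> 1"
    then obtain \<nu> j where Eh: "b = Eh (\<alpha>, \<beta>) \<nu> j" "y \<in> child \<nu> 1"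
      by blast
    then have props: "adm N A \<nu>" "\<nu> \<noteq> []" "1 \<le> j"
      using b IA_D(3)[OF IA] by (auto simp: Eh_in_bidx_set_iff)
    then have "haar \<nu> j y = haar_coeff d (mass \<nu>) j 1"
      using haar_at[OF props(1,2) _ Eh(2)] d_ge_2 by simp
    moreover have "haar_coeff d (mass \<nu>) j 1 > 0"
      using props measure_cyl_pos[OF props(1,2)] d_ge_2 by (simp add: haar_coeff_def)
    ultimately show ?thesis
      using in_Gg Eh b ebasis_Eh by simp
  qed
  then show ?thesis
    using sinv_in_GA[OF IA y(1)] by blast
qed

lemma eigval_eq_basis_eigval:
  assumes b: "b \<in> bidx_set N A"
  shows "eigval N A lam iota b = basis_eigval b"
  unfolding eigval_def
proof (rule the_equality)
  show "\<forall>g\<in>GA N A. absD N A lam (ebasis N A iota b) g = complex_of_real (basis_eigval b) * ebasis N A iota b g"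
    using absD_ebasis[OF b] by blast
  fix \<mu>
  assume "\<forall>g\<in>GA N A. absD N A lam (ebasis N A iota b) g = complex_of_real \<mu> * ebasis N A iota b g"
  moreover obtain g where "g \<in> GA N A" "ebasis N A iota b g \<noteq> 0"
    using ebasis_nonzero[OF b] by blast
  ultimately show "\<mu> = basis_eigval b"
    using absD_ebasis[OF b] by auto
qed


lemma norm_sq_ebasis_Eh:
  assumes mem: "Eh \<gamma> \<nu> j \<in> bidx_set N A"
  shows "indicator (cyl N A (snd \<gamma>)) y * (cmod (ebasis N A iota (Eh \<gamma> \<nu> j) (sinv \<gamma> y)))\<^sup>2
    = (\<Sum>k\<in>{1..d}. (haar_coeff d (mass \<nu>) j k)\<^sup>2 * indicator (child \<nu> k) y)"
proof -
  obtain w where w: "\<nu> = snd \<gamma> @ w" and props: "\<gamma> \<in> IA N A" "adm N A \<nu>"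
    using mem by (auto simp: Eh_in_bidx_set_iff)
  then have ne: "\<nu> \<noteq> []"
    by (auto simp: IA_def)
  show ?thesis
  proof (cases "\<exists>k0\<in>{1..d}. y \<in> child \<nu> k0")
    case True
    then obtain k0 where k0: "k0 \<in> {1..d}" "y \<in> child \<nu> k0"
      by blast
    then have "y \<in> cyl N A (snd \<gamma>)"
      using child_subset w cyl_append_subset by blast
    moreover have "(\<Sum>k\<in>{1..d}. (haar_coeff d (mass \<nu>) j k)\<^sup>2 * indicator (child \<nu> k) y) =
        (\<Sum>k\<in>{1..d}. if k = k0 then (haar_coeff d (mass \<nu>) j k)\<^sup>2 else 0)"
      by (intro sum.cong) (use in_child_iff[OF props(2) ne k0] in auto)
    ultimately show ?thesis
      using k0 sinv_in_Gg[OF props(1)] haar_at[OF props(2) ne k0] by (simp add: ebasis_Eh[OF mem])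
  next
    case False
    then have "haar \<nu> j y = 0"
      by (auto simp: haar_def intro!: sum.neutral)
    with False show ?thesis
      by (auto simp: ebasis_Eh[OF mem] intro!: sum.neutral)
  qed
qed

lemma ebasis_normalized:
  assumes b: "b \<in> bidx_set N A"
  shows "has_bochner_integral mu
    (\<lambda>y. indicator (cyl N A (snd (basis_piece b))) y * (cmod (ebasis N A iota b (sinv (basis_piece b) y)))\<^sup>2) 1"
proof (cases b)
  case (Eg \<gamma>)
  then have g: "\<gamma> \<in> IA N A"
    using b Eg_in_bidx_set_iff by simp
  have c: "mass (snd \<gamma>) > 0"
    using measure_cyl_pos IA_D(2,3) g by (cases \<gamma>) auto
  have "indicator (cyl N A (snd (basis_piece b))) y * (cmod (ebasis N A iota b (sinv (basis_piece b) y)))\<^sup>2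
      = indicator (cyl N A (snd \<gamma>)) y * (1 / mass (snd \<gamma>))" for y
    using sinv_in_Gg[OF g, of y] c Eg
    by (cases "y \<in> cyl N A (snd \<gamma>)") (simp_all add: basis_piece_def ebasis_Eg norm_divide power_divide)
  moreover have "has_bochner_integral mu (\<lambda>y. indicator (cyl N A (snd \<gamma>)) y * (1 / mass (snd \<gamma>)))
      (mass (snd \<gamma>) * (1 / mass (snd \<gamma>)))"
    by (rule has_bochner_integral_mult_left[OF has_bochner_integral_cyl])
  ultimately show ?thesis
    using c by simp
next
  case (Eh \<gamma> \<nu> j)
  have mem: "Eh \<gamma> \<nu> j \<in> bidx_set N A"
    using b Eh by simp
  then have props: "adm N A \<nu>" "\<nu> \<noteq> []" "1 \<le> j" "Suc j \<le> d"
    by (auto simp: Eh_in_bidx_set_iff IA_def)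
  have "has_bochner_integral mu (\<lambda>y. \<Sum>k\<in>{1..d}. (haar_coeff d (mass \<nu>) j k)\<^sup>2 * indicator (child \<nu> k) y)
      (\<Sum>k\<in>{1..d}. (haar_coeff d (mass \<nu>) j k)\<^sup>2 * measure mu (child \<nu> k))"
    unfolding child_def by (intro has_bochner_integral_sum has_bochner_integral_mult_right has_bochner_integral_cyl)
  moreover have "(\<Sum>k\<in>{1..d}. (haar_coeff d (mass \<nu>) j k)\<^sup>2 * measure mu (child \<nu> k)) = 1"
    using sum_haar_coeff_squares[OF props(3,4) measure_cyl_pos[OF props(1,2)]] measure_child[OF props(1,2)]
    by simp
  ultimately show ?thesis
    using Eh norm_sq_ebasis_Eh[OF mem] by (simp add: basis_piece_def)
qed

lemma integral_norm_ebasis_piece: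
  assumes b: "b \<in> bidx_set N A" and g: "\<gamma> \<in> IA N A"
  shows "(\<integral>y. indicator (cyl N A (snd \<gamma>)) y * (cmod (ebasis N A iota b (sinv \<gamma> y)))\<^sup>2 \<partial>mu) =
    (if \<gamma> = basis_piece b then 1 else 0)"
proof (cases "\<gamma> = basis_piece b")
  case True
  then show ?thesis
    using ebasis_normalized[OF b] has_bochner_integral_integral_eq by simp
next
  case False
  have "ebasis N A iota b (sinv \<gamma> y) = 0" if "y \<in> cyl N A (snd \<gamma>)" for y
  proof (rule ebasis_outside_piece)
    show "sinv \<gamma> y \<notin> Gg N A (basis_piece b)"
      using Gg_disjoint[OF sinv_in_Gg[OF g that] _ g basis_piece_in_IA[OF b]] False by auto
  qed
  then have "(\<lambda>y. indicator (cyl N A (snd \<gamma>)) y * (cmod (ebasis N A iota b (sinv \<gamma> y)))\<^sup>2) = (\<lambda>_. 0)"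
    by (auto split: split_indicator)
  then show ?thesis
    using False by simp
qed

lemma integral_piece_proj_word:
  assumes b: "b \<in> bidx_set N A" and g: "\<gamma> \<in> IA N A"
  defines "e \<equiv> ebasis N A iota b"
  shows "(\<integral>y. indicator (cyl N A (snd \<gamma>)) y * (cnj (e (sinv \<gamma> y)) * wordact N A (proj_word i) e (sinv \<gamma> y)) \<partial>mu)
    = (if \<gamma> = basis_piece b \<and> head_letter \<gamma> = i then 1 else 0)"
proof -
  \<comment> \<open>on a piece the projection multiplies by the indicator of the head letter\<close>
  have "indicator (cyl N A (snd \<gamma>)) y * (cnj (e (sinv \<gamma> y)) * wordact N A (proj_word i) e (sinv \<gamma> y))
     = (if head_letter \<gamma> = i then 1 else 0) *
       complex_of_real (indicator (cyl N A (snd \<gamma>)) y * (cmod (e (sinv \<gamma> y)))\<^sup>2)" for y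
    using proj_word_sinv[OF g] complex_norm_square[of "e (sinv \<gamma> y)"]
    by (cases "y \<in> cyl N A (snd \<gamma>)") (simp_all add: mult.commute del: of_real_power)
  then have "(\<integral>y. indicator (cyl N A (snd \<gamma>)) y * (cnj (e (sinv \<gamma> y)) * wordact N A (proj_word i) e (sinv \<gamma> y)) \<partial>mu)
    = (if head_letter \<gamma> = i then 1 else 0) *
        complex_of_real (\<integral>y. indicator (cyl N A (snd \<gamma>)) y * (cmod (e (sinv \<gamma> y)))\<^sup>2 \<partial>mu)"
    by (simp only: integral_mult_right_zero integral_complex_of_real)
  then show ?thesis
    using integral_norm_ebasis_piece[OF b g] by (simp add: e_def)
qed

lemma inner_ebasis_proj_word:
  assumes b: "b \<in> bidx_set N A"
  shows "inner_G N A (ebasis N A iota b) (wordact N A (proj_word i) (ebasis N A iota b)) =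
    (if head_letter (basis_piece b) = i then 1 else 0)"
proof -
  define c :: complex where "c = (if head_letter (basis_piece b) = i then 1 else 0)"
  have "inner_G N A (ebasis N A iota b) (wordact N A (proj_word i) (ebasis N A iota b)) =
      (\<integral>\<gamma>. indicator {basis_piece b} \<gamma> *\<^sub>R c \<partial>count_space (IA N A))"
    unfolding inner_G_def
    by (rule Bochner_Integration.integral_cong[OF refl]) (auto simp: integral_piece_proj_word[OF b] c_def)
  also have "\<dots> = c"
    using basis_piece_in_IA[OF b] has_bochner_integral_integral_eq[OF has_bochner_integral_indicator[of "{basis_piece b}"]]
    by (simp add: measure_count_space)
  finally show ?thesis
    by (simp add: c_def)
qed

end

section \<open>Counting basis vectors by level and head letter\<close>

context regular_shift
begin

lemma finite_adm_words_with: "finite {w. adm N A w \<and> length w = n \<and> P w}"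
  by (rule finite_subset[OF _ finite_adm_words[of N A n]]) auto

(* tails K c: the words beta of length K that can be paired with a word alpha ending in c. *)

definition tails :: "nat \<Rightarrow> nat \<Rightarrow> nat list set" where
  "tails K c = {\<beta>. adm N A \<beta> \<and> length \<beta> = K \<and> \<beta> \<noteq> [] \<and> A c (last \<beta>) = 1 \<and> (K = 1 \<or> c \<noteq> \<beta> ! (K - 2))}"

definition tail_count :: "nat \<Rightarrow> nat" where
  "tail_count K = (if K = 1 then d else d ^ (K - 1) * (d - 1))"

lemma finite_tails: "finite (tails K c)"
  by (rule finite_subset[OF _ finite_adm_words[of N A K]]) (auto simp: tails_def)

(* The last letter c' of a tail is a successor of c, the letter before it a predecessor of c'
   other than c. *)
lemma tails_Suc_Suc_eq:
  fixes m c :: nat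
  defines "F \<equiv> \<lambda>c'. {w. adm N A w \<and> length w = Suc m \<and> last w \<in> {a. a < N \<and> A a c' = 1} - {c}}"
  shows "tails (Suc (Suc m)) c = (\<lambda>(c', w). w @ [c']) ` Sigma {c'. c' < N \<and> A c c' = 1} F"
proof (intro equalityI subsetI)
  fix \<beta>
  assume "\<beta> \<in> tails (Suc (Suc m)) c"
  then have b: "adm N A \<beta>" "length \<beta> = Suc (Suc m)" "A c (last \<beta>) = 1" "c \<noteq> \<beta> ! m"
    by (auto simp: tails_def)
  define w c' where "w = butlast \<beta>" and "c' = last \<beta>"
  have "\<beta> \<noteq> []"
    using b(2) by auto
  then have bw: "\<beta> = w @ [c']" and lw: "length w = Suc m"
    using b(2) by (simp_all add: w_def c'_def)
  then have wne: "w \<noteq> []"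
    by auto
  have aw: "adm N A w" "c' < N" "A (last w) c' = 1"
    using b(1) bw wne by (simp_all add: adm_snoc)
  have "\<beta> ! m = last w"
    using bw lw wne by (simp add: nth_append last_conv_nth)
  then have "w \<in> F c'"
    using aw lw b(4) adm_last_less[OF aw(1) wne] by (auto simp: F_def)
  moreover have "A c c' = 1"
    using b(3) by (simp add: c'_def)
  ultimately show "\<beta> \<in> (\<lambda>(c', w). w @ [c']) ` Sigma {c'. c' < N \<and> A c c' = 1} F"
    using bw aw(2) by (intro image_eqI[of _ _ "(c', w)"]) auto
next
  fix z
  assume "z \<in> (\<lambda>(c', w). w @ [c']) ` Sigma {c'. c' < N \<and> A c c' = 1} F"
  then obtain c' w where z: "z = w @ [c']" "c' < N" "A c c' = 1" "w \<in> F c'"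
    by auto
  then have w: "adm N A w" "length w = Suc m" "A (last w) c' = 1" "last w \<noteq> c"
    by (auto simp: F_def)
  then have wne: "w \<noteq> []"
    by auto
  have "z ! m = last w"
    using z(1) w(2) wne by (simp add: nth_append last_conv_nth)
  then show "z \<in> tails (Suc (Suc m)) c"
    using z w wne by (auto simp: tails_def adm_snoc)
qed

lemma card_tails:
  assumes c: "c < N" and K: "K \<ge> 1"
  shows "card (tails K c) = tail_count K"
proof (cases "K = 1")
  case True
  have "tails K c = (\<lambda>c'. [c']) ` {c'. c' < N \<and> A c c' = 1}"
    using True by (auto simp: tails_def length_Suc_conv adm_def)
  then show ?thesis
    using card_successors[OF c] True by (simp add: card_image inj_on_def tail_count_def)
next
  case False
  define m where "m = K - 2"
  have m: "K = Suc (Suc m)"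
    using K False unfolding m_def by arith
  define F where "F c' = {w. adm N A w \<and> length w = Suc m \<and> last w \<in> {a. a < N \<and> A a c' = 1} - {c}}" for c'
  have "card (F c') = (d - 1) * d ^ m" if c': "c' < N" "A c c' = 1" for c'
  proof -
    have "card ({a. a < N \<and> A a c' = 1} - {c}) = d - 1"
      using c' card_predecessors[of c'] c by simp
    then show ?thesis
      unfolding F_def using card_adm_words_last_in[of "{a. a < N \<and> A a c' = 1} - {c}" m] by auto
  qed
  then have "card (Sigma {c'. c' < N \<and> A c c' = 1} F) = (\<Sum>c'\<in>{c'. c' < N \<and> A c c' = 1}. (d - 1) * d ^ m)"
    by (subst card_SigmaI) (auto simp: F_def intro!: finite_adm_words_with)
  also have "\<dots> = d * ((d - 1) * d ^ m)"
    using card_successors[OF c] by simp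
  finally have card_Sigma: "card (Sigma {c'. c' < N \<and> A c c' = 1} F) = d * ((d - 1) * d ^ m)" .
  have "card (tails K c) = card ((\<lambda>(c', w). w @ [c']) ` Sigma {c'. c' < N \<and> A c c' = 1} F)"
    using m tails_Suc_Suc_eq[of m c] by (simp add: F_def[abs_def])
  also have "\<dots> = card (Sigma {c'. c' < N \<and> A c c' = 1} F)"
    by (rule card_image) (auto simp: inj_on_def)
  finally show ?thesis
    using m card_Sigma by (simp add: tail_count_def mult_ac)
qed

definition pieces_with :: "nat \<Rightarrow> nat \<Rightarrow> nat \<Rightarrow> (nat list \<times> nat list) set" where
  "pieces_with L K i = {\<gamma> \<in> IA N A. length (fst \<gamma>) = L \<and> length (snd \<gamma>) = K \<and> head_letter \<gamma> = i}"

definition piece_count :: "nat \<Rightarrow> nat \<Rightarrow> nat" where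
  "piece_count L K = (if K = 0 then 0 else if L = 0 then d ^ (K - 1) else d ^ (L - 1) * tail_count K)"

lemma finite_pieces_with: "finite (pieces_with L K i)"
proof (rule finite_subset)
  show "pieces_with L K i \<subseteq> {\<alpha>. adm N A \<alpha> \<and> length \<alpha> = L} \<times> {\<beta>. adm N A \<beta> \<and> length \<beta> = K}"
    by (auto simp: pieces_with_def IA_def)
qed (intro finite_cartesian_product finite_adm_words)

lemma pieces_with_eq_Sigma:
  assumes "L \<noteq> 0" "K \<noteq> 0"
  shows "pieces_with L K i = Sigma {w. adm N A w \<and> length w = L \<and> hd w = i} (\<lambda>\<alpha>. tails K (last \<alpha>))"
proof (intro equalityI subsetI)
  fix \<gamma>
  assume "\<gamma> \<in> pieces_with L K i"
  with assms show "\<gamma> \<in> Sigma {w. adm N A w \<and> length w = L \<and> hd w = i} (\<lambda>\<alpha>. tails K (last \<alpha>))"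
    by (cases \<gamma>) (auto simp: pieces_with_def IA_def tails_def head_letter_def)
next
  fix \<gamma>
  assume "\<gamma> \<in> Sigma {w. adm N A w \<and> length w = L \<and> hd w = i} (\<lambda>\<alpha>. tails K (last \<alpha>))"
  with assms show "\<gamma> \<in> pieces_with L K i"
    by (cases \<gamma>) (auto simp: pieces_with_def IA_def tails_def head_letter_def)
qed

lemma card_pieces_with:
  assumes i: "i < N"
  shows "card (pieces_with L K i) = piece_count L K"
proof -
  consider "K = 0" | "K \<noteq> 0" "L = 0" | "K \<noteq> 0" "L \<noteq> 0"
    by blast
  then show ?thesis
  proof cases
    case 1
    then have "pieces_with L K i = {}"
      by (auto simp: pieces_with_def IA_def)
    then show ?thesis
      using 1 by (simp add: piece_count_def)
  next
    case 2
    have "pieces_with L K i = Pair [] ` {w. adm N A w \<and> length w = Suc (K - 1) \<and> last w = i}"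
      using 2 by (auto simp: pieces_with_def IA_def head_letter_def image_iff)
    then have "card (pieces_with L K i) = card {w. adm N A w \<and> length w = Suc (K - 1) \<and> last w = i}"
      by (simp add: card_image inj_on_def)
    also have "\<dots> = d ^ (K - 1)"
      by (rule card_adm_words_last[OF i])
    finally show ?thesis
      using 2 by (simp add: piece_count_def)
  next
    case 3
    let ?H = "{w. adm N A w \<and> length w = Suc (L - 1) \<and> hd w = i}"
    have "pieces_with L K i = Sigma ?H (\<lambda>\<alpha>. tails K (last \<alpha>))"
      using pieces_with_eq_Sigma[of L K i] 3 by simp
    then have "card (pieces_with L K i) = (\<Sum>\<alpha>\<in>?H. card (tails K (last \<alpha>)))"
      by (simp add: card_SigmaI finite_adm_words_with finite_tails)
    also have "\<dots> = (\<Sum>\<alpha>\<in>?H. tail_count K)"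
    proof (rule sum.cong[OF refl])
      fix \<alpha>
      assume "\<alpha> \<in> ?H"
      then have "last \<alpha> < N"
        using adm_last_less[of N A \<alpha>] by (cases \<alpha>) auto
      then show "card (tails K (last \<alpha>)) = tail_count K"
        using card_tails 3 by simp
    qed
    also have "\<dots> = d ^ (L - 1) * tail_count K"
      using card_adm_words_hd[OF _ i] card_successors by simp
    finally show ?thesis
      using 3 by (simp add: piece_count_def)
  qed
qed


end

context regular_triple
begin

definition level_key :: "bidx \<Rightarrow> nat \<times> nat \<times> nat" where
  "level_key b = (case b of Eg \<gamma> \<Rightarrow> (length (fst \<gamma>), length (snd \<gamma>), 0)
     | Eh \<gamma> \<nu> j \<Rightarrow> (length (fst \<gamma>), length (snd \<gamma>), Suc (length \<nu>)))"

lemma basis_eigval_eq_if_level_key_eq: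
  assumes "level_key b = level_key b'"
  shows "basis_eigval b = basis_eigval b'"
  using assms
  by (cases b; cases b') (simp_all add: level_key_def basis_eigval_def Lval_def haar_eigval_def)

definition basis_class :: "nat \<times> nat \<times> nat \<Rightarrow> nat \<Rightarrow> bidx set" where
  "basis_class t i = {b \<in> bidx_set N A. level_key b = t \<and> head_letter (basis_piece b) = i}"

definition class_count :: "nat \<times> nat \<times> nat \<Rightarrow> nat" where
  "class_count t = (case t of (L, K, 0) \<Rightarrow> piece_count L K
     | (L, K, Suc n) \<Rightarrow> (if K \<le> n then piece_count L K * (d ^ (n - K) * (d - 1)) else 0))"

lemma card_basis_class_Eg:
  assumes "i < N"
  shows "card (basis_class (L, K, 0) i) = piece_count L K"
proof -
  have "basis_class (L, K, 0) i = Eg ` pieces_with L K i"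
  proof (intro equalityI subsetI)
    fix b
    assume "b \<in> basis_class (L, K, 0) i"
    then show "b \<in> Eg ` pieces_with L K i"
      by (cases b) (auto simp: basis_class_def level_key_def pieces_with_def basis_piece_def Eg_in_bidx_set_iff)
  qed (auto simp: basis_class_def level_key_def pieces_with_def basis_piece_def Eg_in_bidx_set_iff)
  then show ?thesis
    using card_pieces_with[OF assms] by (simp add: card_image inj_on_def)
qed

lemma card_basis_class_Eh:
  assumes i: "i < N"
  shows "card (basis_class (L, K, Suc n) i) = (if K \<le> n then piece_count L K * (d ^ (n - K) * (d - 1)) else 0)"
proof -
  have Eh_D: "\<exists>\<gamma> \<nu> j w. b = Eh \<gamma> \<nu> j \<and> \<nu> = snd \<gamma> @ w \<and> \<gamma> \<in> pieces_with L K i \<and> adm N A \<nu> \<and>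
      length w = n - K \<and> K \<le> n \<and> j \<in> {1..d - 1}" if "b \<in> basis_class (L, K, Suc n) i" for b
    using that by (cases b) (auto simp: basis_class_def level_key_def pieces_with_def basis_piece_def
        Eh_in_bidx_set_iff)
  show ?thesis
  proof (cases "K \<le> n")
    case False
    then show ?thesis
      using Eh_D by fastforce
  next
    case True
    define F :: "nat list \<times> nat list \<Rightarrow> (nat list \<times> nat) set"
      where "F \<gamma> = {w. adm N A (snd \<gamma> @ w) \<and> length w = n - K} \<times> {1..d - 1}" for \<gamma>
    have eq: "basis_class (L, K, Suc n) i = (\<lambda>(\<gamma>, w, j). Eh \<gamma> (snd \<gamma> @ w) j) ` Sigma (pieces_with L K i) F"
    proof (intro equalityI subsetI)
      fix b
      assume "b \<in> basis_class (L, K, Suc n) i"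
      then obtain \<gamma> \<nu> j w where "b = Eh \<gamma> \<nu> j" "\<nu> = snd \<gamma> @ w" "\<gamma> \<in> pieces_with L K i" "adm N A \<nu>"
          "length w = n - K" "j \<in> {1..d - 1}"
        using Eh_D by blast
      then show "b \<in> (\<lambda>(\<gamma>, w, j). Eh \<gamma> (snd \<gamma> @ w) j) ` Sigma (pieces_with L K i) F"
        by (intro image_eqI[of _ _ "(\<gamma>, w, j)"]) (auto simp: F_def)
    next
      fix b
      assume "b \<in> (\<lambda>(\<gamma>, w, j). Eh \<gamma> (snd \<gamma> @ w) j) ` Sigma (pieces_with L K i) F"
      then show "b \<in> basis_class (L, K, Suc n) i"
        using True d_ge_2
        by (auto simp: basis_class_def level_key_def pieces_with_def basis_piece_def F_def Eh_in_bidx_set_iff)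
    qed
    have "card (F \<gamma>) = d ^ (n - K) * (d - 1)" if "\<gamma> \<in> pieces_with L K i" for \<gamma>
      using that card_adm_extensions[of N A d "snd \<gamma>" "n - K"] card_successors
      by (auto simp: F_def pieces_with_def IA_def card_cartesian_product)
    moreover have "finite (F \<gamma>)" for \<gamma>
      unfolding F_def
      by (intro finite_cartesian_product finite_subset[OF _ finite_adm_words[of N A "n - K"]])
        (auto simp: adm_append)
    ultimately have "card (Sigma (pieces_with L K i) F) = piece_count L K * (d ^ (n - K) * (d - 1))"
      using card_pieces_with[OF i] finite_pieces_with by (simp add: card_SigmaI)
    moreover have "inj_on (\<lambda>(\<gamma>, w, j). Eh \<gamma> (snd \<gamma> @ w) j) (Sigma (pieces_with L K i) F)"
      by (auto simp: inj_on_def)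
    ultimately show ?thesis
      using True unfolding eq by (simp add: card_image)
  qed
qed

lemma card_basis_class: "i < N \<Longrightarrow> card (basis_class t i) = class_count t"
  by (cases t; cases "snd (snd t)") (auto simp: class_count_def card_basis_class_Eg card_basis_class_Eh)

lemma card_head_letter_eq:
  assumes S: "S \<subseteq> bidx_set N A" "finite S"
    and closed: "\<And>b b'. b \<in> S \<Longrightarrow> b' \<in> bidx_set N A \<Longrightarrow> level_key b' = level_key b \<Longrightarrow> b' \<in> S"
    and i: "i < N"
  shows "card {b \<in> S. head_letter (basis_piece b) = i} = (\<Sum>t\<in>level_key ` S. class_count t)"
proof -
  have eq: "{b \<in> S. head_letter (basis_piece b) = i} = (\<Union>t\<in>level_key ` S. basis_class t i)"
    using S closed by (auto simp: basis_class_def)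
  have sub: "basis_class t i \<subseteq> S" if "t \<in> level_key ` S" for t
    using that closed by (auto simp: basis_class_def)
  have "card (\<Union>t\<in>level_key ` S. basis_class t i) = (\<Sum>t\<in>level_key ` S. card (basis_class t i))"
  proof (rule card_UN_disjoint)
    show "finite (level_key ` S)"
      using S(2) by simp
    show "\<forall>t\<in>level_key ` S. finite (basis_class t i)"
      using sub S(2) finite_subset by blast
  qed (auto simp: basis_class_def)
  then show ?thesis
    using eq card_basis_class[OF i] by simp
qed

lemma card_le_twice_head_letter_ne:
  assumes S: "S \<subseteq> bidx_set N A" "finite S"
    and closed: "\<And>b b'. b \<in> S \<Longrightarrow> b' \<in> bidx_set N A \<Longrightarrow> level_key b' = level_key b \<Longrightarrow> b' \<in> S"
    and i0: "i0 < N"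
  shows "card S \<le> 2 * card {b \<in> S. head_letter (basis_piece b) \<noteq> i0}"
proof -
  define C where "C = (\<Sum>t\<in>level_key ` S. class_count t)"
  have C: "i < N \<Longrightarrow> card {b \<in> S. head_letter (basis_piece b) = i} = C" for i
    using card_head_letter_eq[OF S closed] C_def by simp
  have "S = (\<Union>i<N. {b \<in> S. head_letter (basis_piece b) = i})"
    using S head_letter_less basis_piece_in_IA by blast
  moreover have "card (\<Union>i<N. {b \<in> S. head_letter (basis_piece b) = i}) =
      (\<Sum>i<N. card {b \<in> S. head_letter (basis_piece b) = i})"
    by (rule card_UN_disjoint) (use S(2) in auto)
  ultimately have "card S = N * C"
    using C by simp
  moreover have "card S = card {b \<in> S. head_letter (basis_piece b) = i0} +
      card {b \<in> S. head_letter (basis_piece b) \<noteq> i0}"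
  proof -
    have "S = {b \<in> S. head_letter (basis_piece b) = i0} \<union> {b \<in> S. head_letter (basis_piece b) \<noteq> i0}"
      by blast
    then have "card S = card ({b \<in> S. head_letter (basis_piece b) = i0} \<union>
        {b \<in> S. head_letter (basis_piece b) \<noteq> i0})"
      by (rule arg_cong)
    also have "\<dots> = card {b \<in> S. head_letter (basis_piece b) = i0} +
        card {b \<in> S. head_letter (basis_piece b) \<noteq> i0}"
      by (rule card_Un_disjoint) (use S(2) in auto)
    finally show ?thesis .
  qed
  moreover have "2 * C \<le> N * C"
    using N_ge_2 by (rule mult_le_mono1)
  ultimately show ?thesis
    using C[OF i0] by linarith
qed

lemma infinite_basis_eigvals: "infinite (basis_eigval ` bidx_set N A)"
proof -
  obtain x where x: "x \<in> cyl N A [0]"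
    using cyl_nonempty[of "[0]"] N_pos by (auto simp: adm_def)
  define \<nu> where "\<nu> m = map x [0..<Suc m]" for m
  have \<nu>: "adm N A (\<nu> m) \<and> length (\<nu> m) = Suc m \<and> hd (\<nu> m) = 0" for m
    using x adm_prefix[of x] by (simp add: \<nu>_def cyl_def hd_map del: upt_Suc)
  define b where "b m = Eh ([], [0]) (\<nu> m) 1" for m
  have "([], [0]) \<in> IA N A"
    using N_pos by (simp add: IA_def adm_def)
  moreover have "\<nu> m = [0] @ tl (\<nu> m)" for m
    using \<nu>[of m] by (cases "\<nu> m") auto
  ultimately have b_mem: "b m \<in> bidx_set N A" for m
    using \<nu> d_ge_2 by (auto simp: b_def Eh_in_bidx_set_iff)
  have "basis_eigval (b m) = Lval N A ([], [0]) + (real (Suc m) * (real d - 1) + 1) / real N" for m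
    using \<nu>[of m] by (simp add: b_def basis_eigval_def haar_eigval_def)
  then have "strict_mono (\<lambda>m. basis_eigval (b m))"
    using d_ge_2 N_pos by (intro strict_monoI) (simp add: divide_strict_right_mono)
  then have "infinite (range (\<lambda>m. basis_eigval (b m)))"
    using strict_mono_imp_inj_on range_inj_infinite by blast
  moreover have "range (\<lambda>m. basis_eigval (b m)) \<subseteq> basis_eigval ` bidx_set N A"
    using b_mem by auto
  ultimately show ?thesis
    using finite_subset by blast
qed

end

section \<open>The density argument\<close>

context regular_triple
begin

lemma rho_proj_word:
  assumes "enum n \<in> bidx_set N A"
  shows "rho N A iota enum n (wordact N A (proj_word i)) =
    (if head_letter (basis_piece (enum n)) = i then 1 else 0)"
  using inner_ebasis_proj_word[OF assms] by (simp add: rho_def)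

lemma eventually_head_letter_const:
  assumes mem: "\<And>n. enum n \<in> bidx_set N A"
    and conv: "\<forall>T\<in>OA N A. convergent (\<lambda>k. rho N A iota enum (nk k) T)"
  shows "\<exists>i0<N. eventually (\<lambda>k. head_letter (basis_piece (enum (nk k))) = i0) sequentially"
proof -
  define h where "h k = head_letter (basis_piece (enum (nk k)))" for k
  have rho: "rho N A iota enum n (wordact N A (proj_word i)) =
      (if head_letter (basis_piece (enum n)) = i then 1 else 0)" for n i
    by (rule rho_proj_word[OF mem])
  have "convergent (\<lambda>k. rho N A iota enum (nk k) (wordact N A (proj_word i)))" for i
    using conv proj_word_in_OA by blast
  then have "\<exists>c. eventually (\<lambda>k. rho N A iota enum (nk k) (wordact N A (proj_word i)) = c) sequentially" for i
    by (rule convergent_zero_one_eventually_const) (simp add: rho)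
  then obtain c where "\<And>i. eventually (\<lambda>k. rho N A iota enum (nk k) (wordact N A (proj_word i)) = c i) sequentially"
    by metis
  then have "eventually (\<lambda>k. \<forall>i\<in>{..<N}. (if h k = i then 1 else 0) = c i) sequentially"
    by (simp add: eventually_ball_finite rho h_def)
  then obtain K where K: "\<And>k. k \<ge> K \<Longrightarrow> \<forall>i<N. (if h k = i then 1 else 0) = c i"
    by (auto simp: eventually_sequentially)
  have "h K < N"
    unfolding h_def by (rule head_letter_less[OF basis_piece_in_IA[OF mem]])
  then have "(if h K = h K then 1 else 0) = c (h K)"
    using K[OF order.refl] by blast
  then have c: "c (h K) = 1"
    by simp
  have "h k = h K" if "k \<ge> K" for k
  proof -
    have "(if h k = h K then 1 else 0) = c (h K)"
      using K[OF that] \<open>h K < N\<close> by blast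
    with c show ?thesis
      by (simp split: if_splits)
  qed
  then have "eventually (\<lambda>k. h k = h K) sequentially"
    unfolding eventually_sequentially by blast
  then show ?thesis
    using \<open>h K < N\<close> unfolding h_def by blast
qed

lemma head_letter_sparse:
  assumes bij: "bij_betw enum UNIV (bidx_set N A)"
    and mono: "mono (\<lambda>n. basis_eigval (enum n))" and i0: "i0 < N"
  shows "\<exists>M\<ge>Z. Suc M \<le> 2 * card {n. n \<le> M \<and> n \<notin> {n. head_letter (basis_piece (enum n)) = i0}}"
proof -
  have "range (\<lambda>n. basis_eigval (enum n)) = basis_eigval ` range enum"
    by (simp add: image_image)
  also have "range enum = bidx_set N A"
    using bij by (simp add: bij_betw_def)
  finally have "range (\<lambda>n. basis_eigval (enum n)) = basis_eigval ` bidx_set N A" .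
  then obtain M where M: "M \<ge> Z" "basis_eigval (enum M) < basis_eigval (enum (Suc M))"
    using mono_infinite_range_jumps[OF mono] infinite_basis_eigvals by force
  \<comment> \<open>at an eigenvalue jump the first M + 1 basis vectors form a union of level classes\<close>
  define S where "S = enum ` {..M}"
  have S_eq: "S = {b \<in> bidx_set N A. basis_eigval b \<le> basis_eigval (enum M)}"
    unfolding S_def by (rule initial_segment_at_jump[OF bij mono M(2)])
  have "card S \<le> 2 * card {b \<in> S. head_letter (basis_piece b) \<noteq> i0}"
  proof (rule card_le_twice_head_letter_ne[OF _ _ _ i0])
    show "S \<subseteq> bidx_set N A"
      using S_eq by blast
    show "finite S"
      by (simp add: S_def)
    show "b' \<in> S" if "b \<in> S" "b' \<in> bidx_set N A" "level_key b' = level_key b" for b b'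
      using that basis_eigval_eq_if_level_key_eq[OF that(3)] S_eq by auto
  qed
  moreover have "inj enum"
    using bij by (simp add: bij_betw_def)
  then have "card S = Suc M"
    by (simp add: S_def card_image inj_on_def)
  moreover have "{b \<in> S. head_letter (basis_piece b) \<noteq> i0} =
      enum ` {n. n \<le> M \<and> n \<notin> {n. head_letter (basis_piece (enum n)) = i0}}"
    by (auto simp: S_def)
  then have "card {b \<in> S. head_letter (basis_piece b) \<noteq> i0} =
      card {n. n \<le> M \<and> n \<notin> {n. head_letter (basis_piece (enum n)) = i0}}"
    using \<open>inj enum\<close> by (simp add: card_image inj_on_def)
  ultimately show ?thesis
    using M(1) by auto
qed

end

theorem proposition7p6:
  fixes N d :: nat and A :: "nat \<Rightarrow> nat \<Rightarrow> nat" and lam :: real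
    and iota :: "nat list \<Rightarrow> nat \<Rightarrow> nat" and enum :: "nat \<Rightarrow> bidx"
  assumes "\<forall>i<N. \<forall>j<N. A i j \<in> {0, 1}"
    and "primitive N A"
    and "d \<ge> 2"
    and "\<forall>i<N. (\<Sum>j<N. A i j) = d"
    and "\<forall>j<N. (\<Sum>i<N. A i j) = d"
    and "lam > 1"
    and "valid_iota N A iota"
    and "bij_betw enum UNIV (bidx_set N A)"
    and "mono (\<lambda>n. eigval N A lam iota (enum n))"
  shows "\<not> (\<exists>nk :: nat \<Rightarrow> nat. strict_mono nk \<and>
             (\<lambda>M. real (card {k. nk k \<le> M}) / real M) \<longlonglongrightarrow> 1 \<and>
             (\<forall>T\<in>OA N A. convergent (\<lambda>k. rho N A iota enum (nk k) T)))"
proof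
  interpret regular_triple N d A lam iota
    by unfold_locales (use assms in auto)
  have mem: "enum n \<in> bidx_set N A" for n
    using assms(8) bij_betwE by blast
  have mono: "mono (\<lambda>n. basis_eigval (enum n))"
    using assms(9) by (simp add: eigval_eq_basis_eigval[OF mem])
  assume "\<exists>nk. strict_mono nk \<and> (\<lambda>M. real (card {k. nk k \<le> M}) / real M) \<longlonglongrightarrow> 1 \<and>
      (\<forall>T\<in>OA N A. convergent (\<lambda>k. rho N A iota enum (nk k) T))"
  then obtain nk where nk: "strict_mono nk" "(\<lambda>M. real (card {k. nk k \<le> M}) / real M) \<longlonglongrightarrow> 1"
    and conv: "\<forall>T\<in>OA N A. convergent (\<lambda>k. rho N A iota enum (nk k) T)"
    by blast
  obtain i0 where "i0 < N" and "eventually (\<lambda>k. head_letter (basis_piece (enum (nk k))) = i0) sequentially"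
    using eventually_head_letter_const[OF mem conv] by blast
  moreover have "\<not> eventually (\<lambda>k. nk k \<in> {n. head_letter (basis_piece (enum n)) = i0}) sequentially"
    using density_one_subseq_not_eventually_in[OF nk] head_letter_sparse[OF assms(8) mono \<open>i0 < N\<close>]
    by blast
  ultimately show False
    by simp
qed

end
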